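(* Let $\mathbb{K}$ be a field, $R=\mathbb{K}\langle x,y\rangle/(xy-1)$, $f_k=y^{k-1}x^{k-1}-y^kx^k$ and $S_k=Rf_k$ for $k\ge1$, $I=\bigoplus_{k\ge1}S_k=\langle1-yx\rangle$, and $I_0=\{x^{k-1}f_k: k\ge1\}$. Any left ideal $H$ of $R$ can be written as a direct sum of left $R$-submodules $H=\mathbb{K}[y]L\oplus Rp(x)$, where: if $H$ is not semisimple, then $p(x)$ is the unique monic polynomial in $x$ of minimal degree among nonzero polynomials in $x$ belonging to $H$, and $L=H\cap\mathrm{Span}_{\mathbb{K}}(I_0)\cap(S_1\oplus\cdots\oplus S_{\deg(p)})$; if $H$ is semisimple, then $p(x)=0$, $L=H\cap\mathrm{Span}_{\mathbb{K}}(I_0)$ and $H=\mathbb{K}[y]L$.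
   Context: $\mathbb{K}[x]$ and $\mathbb{K}[y]$ denote the subalgebras of $R$ generated by $x$ and $y$ respectively; $\mathbb{K}[y]L$ is the set of $\mathbb{K}[y]$-linear combinations of elements of $L$. *)

theory Defs
  imports "HOL-Computational_Algebra.Polynomial"
begin

text \<open>R has the K-basis y^i x^j (i, j >= 0); an element of R is a finitely
  supported coefficient function on pairs (i,j), the pair (i,j) standing for
  the monomial y^i x^j.  Since x y = 1, one has x^b y^c = x^(b-c) if b >= c
  and y^(c-b) otherwise, whence
  (y^a x^b)(y^c x^d) = y^(a + (c-b)^+) x^(d + (b-c)^+).\<close>

type_synonym 'a jac = "nat \<times> nat \<Rightarrow> 'a"

definition jsupp :: "'a::zero jac \<Rightarrow> (nat \<times> nat) set" where
  "jsupp f = {k. f k \<noteq> 0}"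

definition jac_carrier :: "'a::zero jac set" where
  "jac_carrier = {f. finite (jsupp f)}"

definition jzero :: "'a::zero jac" where
  "jzero = (\<lambda>_. 0)"

definition jadd :: "'a::field jac \<Rightarrow> 'a jac \<Rightarrow> 'a jac" where
  "jadd f g = (\<lambda>k. f k + g k)"

definition jneg :: "'a::field jac \<Rightarrow> 'a jac" where
  "jneg f = (\<lambda>k. - f k)"

definition jsub :: "'a::field jac \<Rightarrow> 'a jac \<Rightarrow> 'a jac" where
  "jsub f g = (\<lambda>k. f k - g k)"

definition jmul :: "'a::field jac \<Rightarrow> 'a jac \<Rightarrow> 'a jac" where
  "jmul f g = (\<lambda>(i, j). \<Sum>(a, b)\<in>jsupp f. \<Sum>(c, d)\<in>jsupp g.
      if (a + (c - b), d + (b - c)) = (i, j) then f (a, b) * g (c, d) else 0)"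

definition jmonom :: "nat \<Rightarrow> nat \<Rightarrow> 'a::field jac" where
  "jmonom i j = (\<lambda>k. if k = (i, j) then 1 else 0)"

definition jone :: "'a::field jac" where "jone = jmonom 0 0"
definition jx :: "'a::field jac" where "jx = jmonom 0 1"
definition jy :: "'a::field jac" where "jy = jmonom 1 0"

definition jpow :: "'a::field jac \<Rightarrow> nat \<Rightarrow> 'a jac" where
  "jpow r n = ((jmul r) ^^ n) jone"

definition eval_x :: "'a::field poly \<Rightarrow> 'a jac" where
  "eval_x p = (\<lambda>k. \<Sum>i\<le>degree p. coeff p i * jpow jx i k)"

definition eval_y :: "'a::field poly \<Rightarrow> 'a jac" where
  "eval_y p = (\<lambda>k. \<Sum>i\<le>degree p. coeff p i * jpow jy i k)"

definition Ky :: "'a::field jac set" where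
  "Ky = range eval_y"

definition lsub :: "'a::field jac set \<Rightarrow> bool" where
  "lsub M \<longleftrightarrow> M \<subseteq> jac_carrier \<and> jzero \<in> M \<and>
     (\<forall>a\<in>M. \<forall>b\<in>M. jadd a b \<in> M) \<and> (\<forall>a\<in>M. jneg a \<in> M) \<and>
     (\<forall>r\<in>jac_carrier. \<forall>a\<in>M. jmul r a \<in> M)"

abbreviation left_ideal :: "'a::field jac set \<Rightarrow> bool" where
  "left_ideal H \<equiv> lsub H"

definition simple_sub :: "'a::field jac set \<Rightarrow> bool" where
  "simple_sub M \<longleftrightarrow> lsub M \<and> M \<noteq> {jzero} \<and>
     (\<forall>N. lsub N \<and> N \<subseteq> M \<longrightarrow> N = {jzero} \<or> N = M)"

definition semisimple_lmod :: "'a::field jac set \<Rightarrow> bool" where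
  "semisimple_lmod H \<longleftrightarrow> lsub H \<and>
     H = {(\<lambda>k. \<Sum>i<n. v i k) | (n::nat) v.
            \<forall>i<n. \<exists>M. simple_sub M \<and> M \<subseteq> H \<and> v i \<in> M}"

definition fk :: "nat \<Rightarrow> 'a::field jac" where
  "fk k = jsub (jmul (jpow jy (k - 1)) (jpow jx (k - 1))) (jmul (jpow jy k) (jpow jx k))"

definition Sk :: "nat \<Rightarrow> 'a::field jac set" where
  "Sk k = {jmul r (fk k) | r. r \<in> jac_carrier}"

definition Ssum :: "nat \<Rightarrow> 'a::field jac set" where
  "Ssum n = {(\<lambda>k. \<Sum>i\<in>{1..n}. v i k) | v. \<forall>i\<in>{1..n}. v i \<in> Sk i}"

definition I0 :: "'a::field jac set" where
  "I0 = {jmul (jpow jx (k - 1)) (fk k) | k. k \<ge> 1}"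

definition kspan :: "'a::field jac set \<Rightarrow> 'a jac set" where
  "kspan A = {(\<lambda>k. \<Sum>i<n. c i * v i k) | (n::nat) c v. \<forall>i<n. v i \<in> A}"

definition KyL :: "'a::field jac set \<Rightarrow> 'a jac set" where
  "KyL L = {(\<lambda>k. \<Sum>i<n. jmul (q i) (l i) k) | (n::nat) q l. \<forall>i<n. q i \<in> Ky \<and> l i \<in> L}"

definition Rprinc :: "'a::field jac \<Rightarrow> 'a jac set" where
  "Rprinc a = {jmul r a | r. r \<in> jac_carrier}"

definition direct_sum_decomp :: "'a::field jac set \<Rightarrow> 'a jac set \<Rightarrow> 'a jac set \<Rightarrow> bool" where
  "direct_sum_decomp H A B \<longleftrightarrow> lsub A \<and> lsub B \<and>
     H = {jadd a b | a b. a \<in> A \<and> b \<in> B} \<and> A \<inter> B = {jzero}"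

definition min_x_poly :: "'a::field jac set \<Rightarrow> 'a poly \<Rightarrow> bool" where
  "min_x_poly H p \<longleftrightarrow> lead_coeff p = 1 \<and> eval_x p \<in> H \<and>
     (\<forall>q. q \<noteq> 0 \<and> eval_x q \<in> H \<longrightarrow> degree p \<le> degree q)"

end

theory Submission
  imports Defs "HOL-Library.Poly_Mapping"
begin

text \<open>
  R is the monoid algebra of the bicyclic monoid; we argue in that algebra, realised as
  a ring type of finitely supported functions, and transport the result to the
  coefficient-function model at the end.
  The element E = 1 - yx satisfies xE = 0 = Ey, and the y^a E x^b multiply like matrix
  units.  Since 1 - y^N x^N = \<Sum>a<N. y^a E x^a, every h with x^N h = 0 decomposes as
  h = \<Sum>a<N. y^a (E x^a h) with E x^a h = E g(x) \<in> span I0; these x-torsion elements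
  are exactly the elements of sums of simple left ideals, so H is semisimple iff all
  its elements are x-torsion.  Otherwise x^N h is a nonzero polynomial in x for some
  h \<in> H and some N, and the monic p of least degree among the polynomials in x lying
  in H divides all of them.  Dividing x^N h and each E x^a h = E w_a(x) by p in
  h = y^N (x^N h) + \<Sum>a<N. y^a (E x^a h) splits h into an element of R p(x) and a
  K[y]-combination of elements E r_a(x) \<in> H with deg r_a < deg p.  The sum is direct:
  for z in both summands each E x^a z is both E (W p)(x) and E G(x) with
  deg G < deg p, hence 0, and z is x-torsion, so z = 0.
\<close>

definition lideal :: "'r::ring set \<Rightarrow> bool" where
  "lideal A \<longleftrightarrow> 0 \<in> A \<and> (\<forall>a\<in>A. \<forall>b\<in>A. a + b \<in> A) \<and> (\<forall>a\<in>A. - a \<in> A) \<and>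
     (\<forall>r. \<forall>a\<in>A. r * a \<in> A)"

lemma lideal_0: "lideal A \<Longrightarrow> 0 \<in> A"
  by (simp add: lideal_def)

lemma lideal_add: "lideal A \<Longrightarrow> a \<in> A \<Longrightarrow> b \<in> A \<Longrightarrow> a + b \<in> A"
  by (simp add: lideal_def)

lemma lideal_mult: "lideal A \<Longrightarrow> a \<in> A \<Longrightarrow> r * a \<in> A"
  by (simp add: lideal_def)

lemma lideal_uminus: "lideal A \<Longrightarrow> a \<in> A \<Longrightarrow> - a \<in> A"
  by (simp add: lideal_def)

lemma lideal_diff: "lideal A \<Longrightarrow> a \<in> A \<Longrightarrow> b \<in> A \<Longrightarrow> a - b \<in> A"
  using lideal_add[of A a "- b"] lideal_uminus[of A b] by simp

lemma lideal_sum: "lideal A \<Longrightarrow> (\<And>i. i \<in> I \<Longrightarrow> f i \<in> A) \<Longrightarrow> sum f I \<in> A"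
  by (induction I rule: infinite_finite_induct) (auto simp: lideal_0 lideal_add)

definition lprincipal :: "'r::ring \<Rightarrow> 'r set" where
  "lprincipal a = {r * a | r. True}"

lemma lideal_lprincipal: "lideal (lprincipal a)"
  unfolding lideal_def lprincipal_def
proof (intro conjI ballI allI)
  show "0 \<in> {r * a |r. True}" by (auto intro: exI[of _ 0])
  fix u v assume "u \<in> {r * a |r. True}" "v \<in> {r * a |r. True}"
  then obtain r s where "u = r * a" "v = s * a" by auto
  then show "u + v \<in> {r * a |r. True}" by (auto simp: distrib_right intro: exI[of _ "r + s"])
next
  fix u assume "u \<in> {r * a |r. True}"
  then show "- u \<in> {r * a |r. True}" by (auto intro: exI[of _ "- _"])
next
  fix t u assume "u \<in> {r * a |r. True}"
  then obtain r where "u = r * a" by auto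
  then show "t * u \<in> {r * a |r. True}" by (auto simp: mult.assoc intro: exI[of _ "t * r"])
qed

lemma lprincipal_self: "a \<in> lprincipal (a::'r::ring_1)"
  unfolding lprincipal_def by (auto intro: exI[of _ 1])

lemma lprincipal_subset: "lideal A \<Longrightarrow> a \<in> A \<Longrightarrow> lprincipal a \<subseteq> A"
  unfolding lprincipal_def by (auto intro: lideal_mult)

lemma lprincipal_0: "lprincipal 0 = {0}"
  by (auto simp: lprincipal_def)

definition simple_lideal :: "'r::ring set \<Rightarrow> bool" where
  "simple_lideal M \<longleftrightarrow> lideal M \<and> M \<noteq> {0} \<and> (\<forall>N. lideal N \<and> N \<subseteq> M \<longrightarrow> N = {0} \<or> N = M)"

definition sums_of_simple_lideals :: "'r::ring set \<Rightarrow> 'r set" where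
  "sums_of_simple_lideals H =
     {(\<Sum>i<n. v i) | (n::nat) v. \<forall>i<n. \<exists>M. simple_lideal M \<and> M \<subseteq> H \<and> v i \<in> M}"

definition semisimple_lideal :: "'r::ring set \<Rightarrow> bool" where
  "semisimple_lideal H \<longleftrightarrow> lideal H \<and> H = sums_of_simple_lideals H"

lemma sums_of_simple_lideals_subset: "lideal H \<Longrightarrow> sums_of_simple_lideals H \<subseteq> H"
  unfolding sums_of_simple_lideals_def by (force intro: lideal_sum)

lemma sums_of_simple_lideals_add:
  assumes "s \<in> sums_of_simple_lideals H" "simple_lideal M" "M \<subseteq> H" "x \<in> M"
  shows "s + x \<in> sums_of_simple_lideals H"
proof -
  obtain n :: nat and v where s: "s = (\<Sum>i<n. v i)"
    and v: "\<forall>i<n. \<exists>M. simple_lideal M \<and> M \<subseteq> H \<and> v i \<in> M"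
    using assms(1) by (auto simp: sums_of_simple_lideals_def)
  have "s + x = (\<Sum>i<Suc n. (v(n := x)) i)" by (simp add: s)
  moreover have "\<forall>i<Suc n. \<exists>M. simple_lideal M \<and> M \<subseteq> H \<and> (v(n := x)) i \<in> M"
    using v assms(2-4) by (auto simp: less_Suc_eq)
  ultimately show ?thesis unfolding sums_of_simple_lideals_def by blast
qed

lemma sums_of_simple_lideals_sum:
  fixes n :: nat
  assumes "\<And>i. i < n \<Longrightarrow> f i = 0 \<or> (\<exists>M. simple_lideal M \<and> M \<subseteq> H \<and> f i \<in> M)"
  shows "(\<Sum>i<n. f i) \<in> sums_of_simple_lideals H"
  using assms
proof (induction n)
  case 0
  show ?case unfolding sums_of_simple_lideals_def by (intro CollectI exI[of _ "0::nat"]) simp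
next
  case (Suc n)
  then have "(\<Sum>i<n. f i) \<in> sums_of_simple_lideals H" by simp
  then show ?case using Suc.prems[of n] by (auto intro: sums_of_simple_lideals_add)
qed

definition lideal_direct_sum :: "'r::ring set \<Rightarrow> 'r set \<Rightarrow> 'r set \<Rightarrow> bool" where
  "lideal_direct_sum H U V \<longleftrightarrow>
     lideal U \<and> lideal V \<and> H = {a + b | a b. a \<in> U \<and> b \<in> V} \<and> U \<inter> V = {0}"

lemma lideal_direct_sumI:
  assumes "lideal H" "lideal U" "lideal V" "U \<subseteq> H" "V \<subseteq> H"
    and "\<And>h. h \<in> H \<Longrightarrow> \<exists>a b. h = a + b \<and> a \<in> U \<and> b \<in> V"
    and "\<And>z. z \<in> U \<Longrightarrow> z \<in> V \<Longrightarrow> z = 0"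
  shows "lideal_direct_sum H U V"
  unfolding lideal_direct_sum_def
  using assms lideal_0[OF assms(2)] lideal_0[OF assms(3)] lideal_add[OF assms(1)] by blast

section \<open>The bicyclic monoid algebra\<close>

text \<open>Bic i j stands for y^i x^j.  The bicyclic monoid is written additively because the
  convolution product on finitely supported functions requires monoid_add keys.\<close>

datatype bicyclic = Bic nat nat

fun bic_pair :: "bicyclic \<Rightarrow> nat \<times> nat" where
  "bic_pair (Bic a b) = (a, b)"

lemma inj_bic_pair: "inj bic_pair"
proof (rule injI)
  fix x y show "bic_pair x = bic_pair y \<Longrightarrow> x = y" by (cases x; cases y) auto
qed

instantiation bicyclic :: monoid_add
begin
definition zero_bicyclic :: bicyclic where "zero_bicyclic = Bic 0 0"
fun plus_bicyclic :: "bicyclic \<Rightarrow> bicyclic \<Rightarrow> bicyclic" where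
  "plus_bicyclic (Bic a b) (Bic c d) = Bic (a + (c - b)) (d + (b - c))"
instance
proof
  fix x y z :: bicyclic
  show "x + y + z = x + (y + z)"
    by (cases x; cases y; cases z) (auto simp: algebra_simps)
  show "0 + x = x" by (cases x) (simp add: zero_bicyclic_def)
  show "x + 0 = x" by (cases x) (simp add: zero_bicyclic_def)
qed
end

type_synonym 'a jacobson = "bicyclic \<Rightarrow>\<^sub>0 'a"

abbreviation yx_monom :: "nat \<Rightarrow> nat \<Rightarrow> 'a::field \<Rightarrow> 'a jacobson" where
  "yx_monom i j c \<equiv> Poly_Mapping.single (Bic i j) c"

definition scalar :: "'a::field \<Rightarrow> 'a jacobson" where "scalar c = Poly_Mapping.single 0 c"
definition X :: "'a::field jacobson" where "X = yx_monom 0 1 1"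
definition Y :: "'a::field jacobson" where "Y = yx_monom 1 0 1"

lemma Bic_zero: "Bic 0 0 = 0" by (simp add: zero_bicyclic_def)

lemma X_mult_Y: "X * Y = (1 :: 'a::field jacobson)"
  by (simp add: X_def Y_def mult_single Bic_zero)

lemma Y_pow: "(Y::'a::field jacobson) ^ n = yx_monom n 0 1"
  by (induction n) (auto simp: Y_def mult_single Bic_zero power_Suc2)

lemma X_pow: "(X::'a::field jacobson) ^ n = yx_monom 0 n 1"
  by (induction n) (auto simp: X_def mult_single Bic_zero power_Suc2)

lemma yx_monom_eq: "yx_monom i j c = scalar c * (Y ^ i * X ^ j :: 'a::field jacobson)"
  by (simp add: Y_pow X_pow scalar_def mult_single Bic_zero)

lemma poly_mapping_sum_single:
  "r = (\<Sum>k\<in>Poly_Mapping.keys r. Poly_Mapping.single k (Poly_Mapping.lookup r k))"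
  by (rule poly_mapping_eqI) (simp add: lookup_sum lookup_single when_def in_keys_iff)

lemma scalar_commute: "scalar c * r = r * (scalar c :: 'a::field jacobson)"
proof -
  have "scalar c * r = (\<Sum>k\<in>Poly_Mapping.keys r. scalar c * Poly_Mapping.single k (Poly_Mapping.lookup r k))"
    by (subst poly_mapping_sum_single) (simp add: sum_distrib_left)
  also have "\<dots> = (\<Sum>k\<in>Poly_Mapping.keys r. Poly_Mapping.single k (Poly_Mapping.lookup r k) * scalar c)"
    by (simp add: scalar_def mult_single mult.commute)
  also have "\<dots> = r * scalar c"
    by (subst (2) poly_mapping_sum_single) (simp add: sum_distrib_right)
  finally show ?thesis .
qed

lemma scalar_add: "scalar (a + b) = scalar a + (scalar b :: 'a::field jacobson)" by (simp add: scalar_def single_add)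
lemma scalar_mult: "scalar (a * b) = scalar a * (scalar b :: 'a::field jacobson)" by (simp add: scalar_def mult_single)
lemma scalar_0[simp]: "scalar 0 = (0 :: 'a::field jacobson)" by (simp add: scalar_def)
lemma scalar_1[simp]: "scalar 1 = (1 :: 'a::field jacobson)" by (simp add: scalar_def)

lemma mult_scalar_left_commute: "a * (scalar c * b) = scalar c * (a * (b::'a::field jacobson))"
  by (metis scalar_commute mult.assoc)

definition peval :: "'a::field jacobson \<Rightarrow> 'a poly \<Rightarrow> 'a jacobson" where
  "peval Z P = (\<Sum>j\<le>degree P. scalar (coeff P j) * Z ^ j)"

lemma peval_bound:
  assumes "degree P < n"
  shows "peval Z P = (\<Sum>j<n. scalar (coeff P j) * Z ^ j)"
proof -
  have "(\<Sum>j<n. scalar (coeff P j) * Z ^ j) =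
      (\<Sum>j\<in>{..degree P} \<union> {degree P<..<n}. scalar (coeff P j) * Z ^ j)"
    using assms by (intro sum.cong) auto
  also have "\<dots> = (\<Sum>j\<le>degree P. scalar (coeff P j) * Z ^ j) +
      (\<Sum>j\<in>{degree P<..<n}. scalar (coeff P j) * Z ^ j)"
    by (rule sum.union_disjoint) auto
  also have "(\<Sum>j\<in>{degree P<..<n}. scalar (coeff P j) * Z ^ j) = 0"
    by (intro sum.neutral) (auto simp: coeff_eq_0)
  finally show ?thesis by (simp add: peval_def)
qed

lemma peval_add: "peval Z (P + Q) = peval Z P + peval Z Q"
proof -
  obtain n where n: "degree P < n" "degree Q < n" "degree (P + Q) < n"
    using degree_add_le_max[of P Q] by (intro that[of "Suc (degree P + degree Q)"]) auto
  then show ?thesis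
    by (simp add: peval_bound[of _ n] scalar_add distrib_right sum.distrib)
qed

lemma peval_smult: "peval Z (smult c P) = scalar c * peval Z P"
proof -
  obtain n where n: "degree P < n" "degree (smult c P) < n"
    using degree_smult_le[of c P] by (intro that[of "Suc (degree P)"]) auto
  then show ?thesis
    by (simp add: peval_bound[of _ n] scalar_mult sum_distrib_left mult.assoc)
qed

lemma peval_0[simp]: "peval Z 0 = 0" by (simp add: peval_def)

lemma peval_pCons: "peval Z (pCons a P) = scalar a + Z * peval Z P"
proof -
  define n where "n = Suc (degree P)"
  have d: "degree (pCons a P) < Suc n" using degree_pCons_le[of a P] by (simp add: n_def)
  have "peval Z (pCons a P) = (\<Sum>j<Suc n. scalar (coeff (pCons a P) j) * Z ^ j)" by (rule peval_bound[OF d])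
  also have "\<dots> = scalar a + (\<Sum>j<n. scalar (coeff P j) * Z ^ Suc j)"
    by (subst sum.lessThan_Suc_shift) simp
  also have "(\<Sum>j<n. scalar (coeff P j) * Z ^ Suc j) = Z * (\<Sum>j<n. scalar (coeff P j) * Z ^ j)"
    unfolding sum_distrib_left
  proof (rule sum.cong)
    fix j
    show "scalar (coeff P j) * Z ^ Suc j = Z * (scalar (coeff P j) * Z ^ j)"
      by (simp only: mult.assoc[symmetric] scalar_commute[symmetric]) (simp add: mult.assoc)
  qed simp
  also have "(\<Sum>j<n. scalar (coeff P j) * Z ^ j) = peval Z P" by (rule peval_bound[symmetric]) (simp add: n_def)
  finally show ?thesis .
qed

lemma peval_mult: "peval Z (P * Q) = peval Z P * peval Z Q"
proof (induction P)
  case 0 then show ?case by simp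
next
  case (pCons a P)
  have "pCons a P * Q = smult a Q + pCons 0 (P * Q)" by simp
  then have "peval Z (pCons a P * Q) = scalar a * peval Z Q + Z * peval Z (P * Q)"
    by (simp add: peval_add peval_smult peval_pCons)
  also have "\<dots> = (scalar a + Z * peval Z P) * peval Z Q" using pCons(2) by (simp add: algebra_simps)
  finally show ?case by (simp add: peval_pCons)
qed

lemma peval_monom: "peval Z (monom c j) = scalar c * Z ^ j"
proof -
  have "degree (monom c j) < Suc j" by (simp add: degree_monom_le less_Suc_eq_le)
  then have "peval Z (monom c j) = (\<Sum>i<Suc j. scalar (coeff (monom c j) i) * Z ^ i)" by (rule peval_bound)
  also have "\<dots> = scalar c * Z ^ j" by (simp add: coeff_monom)
  finally show ?thesis .
qed

lemma peval_diff: "peval Z (P - Q) = peval Z P - peval Z Q"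
  using peval_add[of Z "P - Q" Q] by simp

lemma peval_uminus: "peval Z (- P) = - peval Z P"
  using peval_add[of Z "- P" P] by (simp add: eq_neg_iff_add_eq_0)

lemma peval_comm: "peval Z P * peval Z Q = peval Z Q * peval Z P"
  by (metis peval_mult mult.commute)

lemma peval_sum: "peval Z (sum f A) = (\<Sum>i\<in>A. peval Z (f i))"
  by (induction A rule: infinite_finite_induct) (auto simp: peval_add)

lemma Y_pow_mult_peval_X: "Y ^ i * peval X P = (\<Sum>j\<le>degree P. yx_monom i j (coeff P j))"
  unfolding peval_def sum_distrib_left
proof (rule sum.cong)
  fix j
  have "Y ^ i * (scalar (coeff P j) * X ^ j) = (Y ^ i * scalar (coeff P j)) * X ^ j" by (simp add: mult.assoc)
  also have "\<dots> = scalar (coeff P j) * (Y ^ i * X ^ j)"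
    by (simp only: scalar_commute[of _ "Y ^ i", symmetric] mult.assoc)
  finally show "Y ^ i * (scalar (coeff P j) * X ^ j) = yx_monom i j (coeff P j)" by (simp add: yx_monom_eq)
qed simp

lemma lookup_Y_pow_mult_peval_X: "Poly_Mapping.lookup (Y ^ i * peval X P) (Bic a b) = (if a = i then coeff P b else 0)"
  by (auto simp: Y_pow_mult_peval_X lookup_sum lookup_single when_def coeff_eq_0)

lemma lookup_row_sum: "Poly_Mapping.lookup (\<Sum>i<n. Y ^ i * peval X (P i)) (Bic a b) = (if a < n then coeff (P a) b else 0)"
  by (simp add: lookup_sum lookup_Y_pow_mult_peval_X)

lemma row_sum_unique:
  assumes "(\<Sum>i<n. Y ^ i * peval X (P i)) = (\<Sum>i<n. Y ^ i * peval X (Q i))" "i < n"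
  shows "P i = Q i"
proof (rule poly_eqI)
  fix b
  from assms show "coeff (P i) b = coeff (Q i) b"
    using lookup_row_sum[where P=P and n=n and a=i and b=b] lookup_row_sum[where P=Q and n=n and a=i and b=b]
    by simp
qed

lemma row_sum_eq_0:
  assumes "(\<Sum>i<n. Y ^ i * peval X (P i)) = 0" "i < n"
  shows "P i = 0"
  using row_sum_unique[where n=n and P=P and Q="\<lambda>_. 0" and i=i] assms by simp

definition row :: "'a::field jacobson \<Rightarrow> nat \<Rightarrow> 'a poly" where
  "row r i = Abs_poly (\<lambda>j. Poly_Mapping.lookup r (Bic i j))"

lemma lookup_Bic_eq_0_beyond_Max:
  assumes "Max (f ` bic_pair ` Poly_Mapping.keys r) < f (i, j)"
  shows "Poly_Mapping.lookup r (Bic i j) = 0"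
proof (rule ccontr)
  assume "Poly_Mapping.lookup r (Bic i j) \<noteq> 0"
  then have "(i, j) \<in> bic_pair ` Poly_Mapping.keys r"
    by (auto simp: in_keys_iff intro!: image_eqI[where x="Bic i j"])
  then have "f (i, j) \<le> Max (f ` bic_pair ` Poly_Mapping.keys r)" by (intro Max_ge) auto
  with assms show False by simp
qed

lemma coeff_row: "coeff (row r i) = (\<lambda>j. Poly_Mapping.lookup r (Bic i j))"
  unfolding row_def
  by (rule coeff_Abs_poly) (rule lookup_Bic_eq_0_beyond_Max[where f=snd], simp)

lemma row_expansion: "\<exists>N. \<forall>n\<ge>N. r = (\<Sum>i<n. Y ^ i * peval X (row r i))"
proof (intro exI allI impI)
  fix n assume n: "Suc (Max (fst ` bic_pair ` Poly_Mapping.keys r)) \<le> n"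
  have beyond: "Poly_Mapping.lookup r (Bic a b) = 0" if "n \<le> a" for a b
    using n that by (intro lookup_Bic_eq_0_beyond_Max[where f=fst]) simp
  show "r = (\<Sum>i<n. Y ^ i * peval X (row r i))"
  proof (intro poly_mapping_eqI)
    fix k show "Poly_Mapping.lookup r k = Poly_Mapping.lookup (\<Sum>i<n. Y ^ i * peval X (row r i)) k"
      using beyond by (cases k) (auto simp: lookup_row_sum coeff_row)
  qed
qed

section \<open>The idempotent E = 1 - yx\<close>

definition E :: "'a::field jacobson" where "E = 1 - Y * X"

lemma E_mult_Y: "E * Y = (0::'a::field jacobson)"
  by (simp add: E_def left_diff_distrib mult.assoc X_mult_Y)

lemma X_mult_E: "X * E = (0::'a::field jacobson)"
  by (simp add: E_def right_diff_distrib mult.assoc[symmetric] X_mult_Y)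

lemma E_idem: "E * E = (E::'a::field jacobson)"
proof -
  have "E * E = E * 1 - E * Y * X" by (simp add: E_def right_diff_distrib mult.assoc)
  then show ?thesis by (simp add: E_mult_Y)
qed

lemma X_pow_mult_Y_pow: "X ^ a * Y ^ a = (1::'a::field jacobson)"
proof (induction a)
  case (Suc a)
  have "X ^ Suc a * Y ^ Suc a = X * (X ^ a * Y ^ a) * (Y::'a jacobson)"
    by (simp only: power_Suc[of X] power_Suc2[of Y] mult.assoc)
  then show ?case using Suc by (simp add: X_mult_Y)
qed simp

lemma X_pow_add_mult_Y_pow: "X ^ (a + k) * Y ^ a = (X::'a::field jacobson) ^ k"
  by (simp only: add.commute[of a k] power_add mult.assoc X_pow_mult_Y_pow mult_1_right)

lemma X_pow_mult_Y_pow_add: "X ^ a * Y ^ (a + k) = (Y::'a::field jacobson) ^ k"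
  by (simp only: power_add mult.assoc[symmetric] X_pow_mult_Y_pow mult_1_left)

lemma X_pow_mult_Y_pow_le: "i \<le> M \<Longrightarrow> X ^ M * Y ^ i = (X::'a::field jacobson) ^ (M - i)"
  using X_pow_add_mult_Y_pow[of i "M - i"] by simp

lemma E_mult_Y_pow_Suc: "E * Y ^ Suc k = (0::'a::field jacobson)"
  by (simp only: power_Suc mult.assoc[symmetric] E_mult_Y mult_zero_left)

lemma X_pow_Suc_mult_E: "X ^ Suc k * E = (0::'a::field jacobson)"
  by (simp only: power_Suc2 mult.assoc X_mult_E mult_zero_right)

lemma E_X_pow_Y_pow_E: "E * X ^ a * Y ^ b * E = (if a = b then E else (0::'a::field jacobson))"
proof (cases "a \<le> b")
  case True
  then obtain k where b: "b = a + k" by (metis le_add_diff_inverse)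
  then have "E * X ^ a * Y ^ b * E = E * Y ^ k * E"
    by (simp add: mult.assoc X_pow_mult_Y_pow_add)
  also have "\<dots> = (if a = b then E else 0)"
    using b by (cases k) (simp_all add: E_idem E_mult_Y_pow_Suc del: power_Suc)
  finally show ?thesis .
next
  case False
  then obtain k where a: "a = b + Suc k" by (metis add_Suc_right less_imp_Suc_add not_le)
  then have "X ^ a * Y ^ b = X ^ Suc k" using X_pow_mult_Y_pow_le[of b a] by (simp del: power_Suc)
  then have "E * X ^ a * Y ^ b * E = E * (X ^ Suc k * E)" by (metis mult.assoc)
  then show ?thesis using a by (simp only: X_pow_Suc_mult_E) simp
qed

lemma Y_pow_E_X_pow: "Y ^ a * E * X ^ a = Y ^ a * X ^ a - Y ^ Suc a * (X::'a::field jacobson) ^ Suc a"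
  unfolding E_def power_Suc2[of Y] power_Suc[of X] by (simp add: algebra_simps)

lemma one_minus_Y_pow_X_pow: "1 - Y ^ N * X ^ N = (\<Sum>a<N. Y ^ a * E * (X::'a::field jacobson) ^ a)"
  using sum_lessThan_telescope'[of "\<lambda>a. Y ^ a * X ^ a" N, symmetric] by (simp add: Y_pow_E_X_pow del: power_Suc)

section \<open>x-torsion and semisimplicity\<close>

definition X_torsion :: "'a::field jacobson \<Rightarrow> bool" where
  "X_torsion h \<longleftrightarrow> (\<exists>N. X ^ N * h = 0)"

lemma X_pow_mult_eq_0_mono:
  assumes "X ^ N * h = 0" "N \<le> M"
  shows "X ^ M * (h::'a::field jacobson) = 0"
proof -
  obtain k where "M = k + N" using assms(2) by (metis le_add_diff_inverse2)
  then show ?thesis using assms(1) by (simp add: power_add mult.assoc)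
qed

lemma X_torsion_0: "X_torsion 0"
  by (simp add: X_torsion_def)

lemma X_torsion_add:
  assumes "X_torsion a" "X_torsion b"
  shows "X_torsion (a + b)"
proof -
  obtain N M where "X ^ N * a = 0" "X ^ M * b = 0" using assms by (auto simp: X_torsion_def)
  then have "X ^ (N + M) * a = 0" "X ^ (N + M) * b = 0" by (auto elim: X_pow_mult_eq_0_mono)
  then show ?thesis unfolding X_torsion_def by (intro exI[of _ "N + M"]) (simp add: distrib_left)
qed

lemma X_torsion_sum: "(\<And>i. i \<in> A \<Longrightarrow> X_torsion (f i)) \<Longrightarrow> X_torsion (sum f A)"
  by (induction A rule: infinite_finite_induct) (auto simp: X_torsion_0 X_torsion_add)

lemma Y_pow_X_pow_expansion:
  "h = Y ^ N * (X ^ N * h) + (\<Sum>a<N. Y ^ a * (E * X ^ a * (h::'a::field jacobson)))"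
proof -
  have "h = (1 - Y ^ N * X ^ N) * h + Y ^ N * (X ^ N * h)" by (simp add: algebra_simps)
  also have "(1 - Y ^ N * X ^ N) * h = (\<Sum>a<N. Y ^ a * (E * X ^ a * h))"
    by (simp add: one_minus_Y_pow_X_pow sum_distrib_right mult.assoc)
  finally show ?thesis by (simp add: add.commute)
qed

lemma X_torsion_expansion:
  "X ^ N * h = 0 \<Longrightarrow> h = (\<Sum>a<N. Y ^ a * (E * X ^ a * (h::'a::field jacobson)))"
  using Y_pow_X_pow_expansion[of h N] by simp

lemma X_pow_mult_eq_peval_X: "\<exists>N g. X ^ N * r = peval X g"
proof -
  obtain N where N: "\<And>n. n \<ge> N \<Longrightarrow> r = (\<Sum>i<n. Y ^ i * peval X (row r i))"
    using row_expansion by blast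
  have "X ^ N * r = (\<Sum>i<N. X ^ N * Y ^ i * peval X (row r i))"
    by (subst N[OF order.refl]) (simp add: sum_distrib_left mult.assoc)
  also have "\<dots> = (\<Sum>i<N. peval X (monom 1 (N - i) * row r i))"
    by (intro sum.cong refl) (simp add: X_pow_mult_Y_pow_le peval_mult peval_monom)
  also have "\<dots> = peval X (\<Sum>i<N. monom 1 (N - i) * row r i)" by (simp add: peval_sum)
  finally show ?thesis by blast
qed

lemma E_mult_row: "E * r = E * peval X (row r 0)"
proof -
  obtain N where N: "\<And>n. n \<ge> N \<Longrightarrow> r = (\<Sum>i<n. Y ^ i * peval X (row r i))"
    using row_expansion by blast
  have "E * r = (\<Sum>i<Suc N. E * (Y ^ i * peval X (row r i)))"
    by (subst N[of "Suc N"]) (simp_all add: sum_distrib_left del: sum.lessThan_Suc)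
  also have "\<dots> = E * peval X (row r 0)"
    by (subst sum.lessThan_Suc_shift) (simp add: mult.assoc[symmetric] E_mult_Y)
  finally show ?thesis .
qed

lemma peval_X_eq_0: "peval X g = 0 \<Longrightarrow> g = 0"
  using row_sum_eq_0[where n=1 and P="\<lambda>_. g" and i=0] by simp

lemma E_mult_peval_X_eq_0:
  assumes "E * peval X g = 0"
  shows "g = 0"
proof -
  define P where "P = (\<lambda>i::nat. if i = 0 then g else - (monom 1 1 * g))"
  have "(\<Sum>i<2. Y ^ i * peval X (P i)) = peval X g - Y * (X * peval X g)"
    by (simp add: P_def numeral_2_eq_2 peval_mult peval_monom peval_uminus)
  also have "\<dots> = E * peval X g" by (simp add: E_def left_diff_distrib mult.assoc)
  finally have "(\<Sum>i<2. Y ^ i * peval X (P i)) = 0" using assms by simp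
  from row_sum_eq_0[OF this, of 0] show ?thesis by (simp add: P_def)
qed

lemma peval_X_mult_E: "peval X P * E = scalar (coeff P 0) * E"
proof (cases P)
  case (pCons a P')
  have "peval X P * E = scalar a * E + X * peval X P' * E"
    by (simp add: pCons peval_pCons distrib_right)
  also have "X * peval X P' = peval X P' * X"
    using peval_comm[of X "monom 1 1" P'] by (simp add: peval_monom)
  finally have "peval X P * E = scalar a * E + peval X P' * (X * E)" by (simp add: mult.assoc)
  then show ?thesis by (simp add: pCons X_mult_E)
qed

lemma E_mult_eq_self: "X * v = 0 \<Longrightarrow> E * v = (v::'a::field jacobson)"
  by (simp add: E_def left_diff_distrib mult.assoc)

text \<open>Together with E v = v for x v = 0, this gives R v = K[y] v for every v killed by x.\<close>

lemma mult_E_eq_peval_Y_mult_E: "\<exists>Q. r * E = peval Y Q * E"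
proof -
  obtain N where N: "\<And>n. n \<ge> N \<Longrightarrow> r = (\<Sum>i<n. Y ^ i * peval X (row r i))"
    using row_expansion by blast
  have "r * E = (\<Sum>i<N. Y ^ i * (peval X (row r i) * E))"
    by (subst N[OF order.refl]) (simp add: sum_distrib_right mult.assoc)
  also have "\<dots> = (\<Sum>i<N. scalar (coeff (row r i) 0) * Y ^ i * E)"
    by (intro sum.cong refl) (simp add: peval_X_mult_E mult.assoc scalar_commute)
  also have "\<dots> = peval Y (\<Sum>i<N. monom (coeff (row r i) 0) i) * E"
    by (simp add: peval_sum peval_monom sum_distrib_right)
  finally show ?thesis by blast
qed

lemma X_pow_degree_mult_peval_Y:
  assumes "X * v = 0"
  shows "X ^ degree Q * (peval Y Q * v) = scalar (lead_coeff Q) * (v::'a::field jacobson)"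
proof -
  have summand: "X ^ degree Q * (scalar (coeff Q i) * Y ^ i * v) =
      (if i = degree Q then scalar (lead_coeff Q) * v else 0)" if "i \<le> degree Q" for i
  proof -
    have "X ^ degree Q * (scalar (coeff Q i) * Y ^ i * v) = scalar (coeff Q i) * (X ^ degree Q * Y ^ i * v)"
      by (simp only: mult.assoc mult_scalar_left_commute)
    also have "X ^ degree Q * Y ^ i = X ^ (degree Q - i)" by (rule X_pow_mult_Y_pow_le[OF that])
    finally have "X ^ degree Q * (scalar (coeff Q i) * Y ^ i * v) = scalar (coeff Q i) * (X ^ (degree Q - i) * v)" .
    moreover have "X ^ (degree Q - i) * v = 0" if "i \<noteq> degree Q"
      using X_pow_mult_eq_0_mono[of 1 v "degree Q - i"] \<open>i \<le> degree Q\<close> that assms by simp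
    ultimately show ?thesis by auto
  qed
  have "X ^ degree Q * (peval Y Q * v) = (\<Sum>i\<le>degree Q. X ^ degree Q * (scalar (coeff Q i) * Y ^ i * v))"
    by (simp add: peval_def sum_distrib_left sum_distrib_right)
  also have "\<dots> = (\<Sum>i\<le>degree Q. if i = degree Q then scalar (lead_coeff Q) * v else 0)"
    by (intro sum.cong refl) (simp add: summand)
  finally show ?thesis by simp
qed

lemma lideal_mem_if_peval_Y_mult_mem:
  assumes "lideal N" "X * v = 0" "peval Y Q * v \<in> N" "peval Y Q * v \<noteq> 0"
  shows "v \<in> N"
proof -
  have "Q \<noteq> 0" using assms(4) by auto
  then have "v = scalar (inverse (lead_coeff Q)) * (scalar (lead_coeff Q) * v)"
    by (simp add: mult.assoc[symmetric] scalar_mult[symmetric])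
  also have "\<dots> = scalar (inverse (lead_coeff Q)) * (X ^ degree Q * (peval Y Q * v))"
    by (simp only: X_pow_degree_mult_peval_Y[OF assms(2)])
  finally show ?thesis using assms(1,3) by (metis lideal_mult)
qed

lemma peval_X_notin_lprincipal_X_mult:
  assumes "g \<noteq> 0"
  shows "peval X g \<notin> lprincipal (X * peval X g)"
proof
  assume "peval X g \<in> lprincipal (X * peval X g)"
  then obtain r where r: "peval X g = r * (X * peval X g)" by (auto simp: lprincipal_def)
  obtain N where N: "\<And>n. n \<ge> N \<Longrightarrow> r = (\<Sum>i<n. Y ^ i * peval X (row r i))"
    using row_expansion by blast
  define P where "P = (\<lambda>i. row r i * (monom 1 1 * g))"
  define Q where "Q = (\<lambda>i::nat. if i = 0 then g else 0)"
  have "(\<Sum>i<Suc N. Y ^ i * peval X (P i)) = r * (X * peval X g)"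
    by (subst N[of "Suc N"])
      (simp_all add: P_def sum_distrib_right peval_mult peval_monom mult.assoc del: sum.lessThan_Suc)
  also have "\<dots> = (\<Sum>i<Suc N. Y ^ i * peval X (Q i))"
    using r[symmetric] by (subst sum.lessThan_Suc_shift) (simp add: Q_def)
  finally have "P 0 = Q 0" by (rule row_sum_unique) simp
  then have eq: "row r 0 * (monom 1 1 * g) = g" by (simp add: P_def Q_def)
  then have "row r 0 \<noteq> 0" using assms by auto
  then have "degree g = degree (row r 0) + (1 + degree g)"
    using assms by (subst (1) eq[symmetric]) (simp add: degree_mult_eq degree_monom_eq)
  then show False by simp
qed

lemma simple_lideal_X_torsion:
  assumes M: "simple_lideal M" and h: "h \<in> M"
  shows "X_torsion h"
proof (rule ccontr)
  assume "\<not> X_torsion h"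
  obtain N g where g: "X ^ N * h = peval X g" using X_pow_mult_eq_peval_X by blast
  with \<open>\<not> X_torsion h\<close> have "g \<noteq> 0" by (auto simp: X_torsion_def)
  have lM: "lideal M" using M by (simp add: simple_lideal_def)
  have gM: "peval X g \<in> M" using g lideal_mult[OF lM h] by metis
  have "X * peval X g \<noteq> 0"
    using \<open>g \<noteq> 0\<close> peval_X_eq_0[of "monom 1 1 * g"] by (auto simp: peval_mult peval_monom)
  then have "lprincipal (X * peval X g) \<noteq> {0}" using lprincipal_self by blast
  moreover have "lprincipal (X * peval X g) \<subseteq> M" by (intro lprincipal_subset lM lideal_mult gM)
  ultimately have "lprincipal (X * peval X g) = M" using M lideal_lprincipal by (auto simp: simple_lideal_def)
  with gM peval_X_notin_lprincipal_X_mult[OF \<open>g \<noteq> 0\<close>] show False by simp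
qed

lemma simple_lprincipal:
  assumes "X * v = 0" "v \<noteq> 0"
  shows "simple_lideal (lprincipal v)"
  unfolding simple_lideal_def
proof (intro conjI allI impI lideal_lprincipal)
  show "lprincipal v \<noteq> {0}" using lprincipal_self[of v] assms(2) by blast
  fix N assume N: "lideal N \<and> N \<subseteq> lprincipal v"
  show "N = {0} \<or> N = lprincipal v"
  proof (cases "N = {0}")
    case False
    then obtain u where u: "u \<in> N" "u \<noteq> 0" using N lideal_0 by blast
    then obtain r where "u = r * v" using N by (auto simp: lprincipal_def)
    obtain Q where Q: "r * E = peval Y Q * E" using mult_E_eq_peval_Y_mult_E by blast
    have "u = peval Y Q * v"
      using \<open>u = r * v\<close> E_mult_eq_self[OF assms(1)] by (metis Q mult.assoc)
    with u N assms(1) have "v \<in> N" by (metis lideal_mem_if_peval_Y_mult_mem)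
    then show ?thesis using N lprincipal_subset by blast
  qed simp
qed

lemma semisimple_lideal_X_torsion:
  assumes "semisimple_lideal H" "h \<in> H"
  shows "X_torsion h"
proof -
  from assms obtain n :: nat and v where h: "h = (\<Sum>i<n. v i)"
    and v: "\<forall>i<n. \<exists>M. simple_lideal M \<and> M \<subseteq> H \<and> v i \<in> M"
    unfolding semisimple_lideal_def sums_of_simple_lideals_def by blast
  show ?thesis unfolding h by (rule X_torsion_sum) (use v simple_lideal_X_torsion in blast)
qed

lemma X_torsion_semisimple_lideal:
  assumes H: "lideal H" and tors: "\<And>h. h \<in> H \<Longrightarrow> X_torsion h"
  shows "semisimple_lideal H"
  unfolding semisimple_lideal_def
proof (intro conjI H equalityI subsetI)
  fix h assume "h \<in> sums_of_simple_lideals H"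
  then show "h \<in> H" using sums_of_simple_lideals_subset[OF H] by blast
next
  fix h assume hH: "h \<in> H"
  obtain N where N: "X ^ N * h = 0" using tors[OF hH] by (auto simp: X_torsion_def)
  define u where "u a = E * X ^ a * h" for a
  have u: "X * u a = 0" "u a \<in> H" for a
    using hH H by (simp_all add: u_def X_mult_E mult.assoc[symmetric] lideal_mult)
  have "Y ^ a * u a = 0 \<or> (\<exists>M. simple_lideal M \<and> M \<subseteq> H \<and> Y ^ a * u a \<in> M)" for a
  proof (cases "u a = 0")
    case False
    then show ?thesis using simple_lprincipal[OF u(1) False] lprincipal_subset[OF H u(2)]
      by (intro disjI2 exI[of _ "lprincipal (u a)"]) (auto simp: lprincipal_def)
  qed simp
  then have "(\<Sum>a<N. Y ^ a * u a) \<in> sums_of_simple_lideals H"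
    by (intro sums_of_simple_lideals_sum) blast
  then show "h \<in> sums_of_simple_lideals H" using X_torsion_expansion[OF N] by (simp add: u_def)
qed

lemma semisimple_lideal_iff_X_torsion: "lideal H \<Longrightarrow> semisimple_lideal H \<longleftrightarrow> (\<forall>h\<in>H. X_torsion h)"
  using semisimple_lideal_X_torsion X_torsion_semisimple_lideal by blast

section \<open>The decomposition in the monoid algebra\<close>

text \<open>Counterparts on 'a jacobson of the notions of the statement carry the suffix _R
  (or are the generic lideal, lprincipal, simple_lideal, semisimple_lideal, lideal_direct_sum
  and peval X); the lemmas *_to_jac at the end identify them via to_jac.\<close>

definition fk_R :: "nat \<Rightarrow> 'a::field jacobson" where
  "fk_R k = Y ^ (k - 1) * X ^ (k - 1) - Y ^ k * X ^ k"

definition Sk_R :: "nat \<Rightarrow> 'a::field jacobson set" where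
  "Sk_R k = lprincipal (fk_R k)"

definition Ssum_R :: "nat \<Rightarrow> 'a::field jacobson set" where
  "Ssum_R n = {(\<Sum>i\<in>{1..n}. v i) | v. \<forall>i\<in>{1..n}. v i \<in> Sk_R i}"

definition I0_R :: "'a::field jacobson set" where
  "I0_R = {X ^ (k - 1) * fk_R k | k. k \<ge> 1}"

definition kspan_R :: "'a::field jacobson set \<Rightarrow> 'a jacobson set" where
  "kspan_R A = {(\<Sum>i<n. scalar (c i) * v i) | (n::nat) c v. \<forall>i<n. v i \<in> A}"

definition Ky_R :: "'a::field jacobson set" where
  "Ky_R = range (peval Y)"

definition KyL_R :: "'a::field jacobson set \<Rightarrow> 'a jacobson set" where
  "KyL_R L = {(\<Sum>i<n. q i * l i) | (n::nat) q l. \<forall>i<n. q i \<in> Ky_R \<and> l i \<in> L}"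

definition min_x_poly_R :: "'a::field jacobson set \<Rightarrow> 'a poly \<Rightarrow> bool" where
  "min_x_poly_R H p \<longleftrightarrow> lead_coeff p = 1 \<and> peval X p \<in> H \<and>
     (\<forall>q. q \<noteq> 0 \<and> peval X q \<in> H \<longrightarrow> degree p \<le> degree q)"

lemma fk_R_Suc: "fk_R (Suc j) = Y ^ j * E * (X::'a::field jacobson) ^ j"
  by (simp add: fk_R_def Y_pow_E_X_pow)

lemma X_pow_mult_fk_R: "X ^ j * fk_R (Suc j) = E * (X::'a::field jacobson) ^ j"
  by (simp add: fk_R_Suc mult.assoc[symmetric] X_pow_mult_Y_pow)

lemma I0_R_eq: "I0_R = {E * X ^ j | j. True}"
proof (intro equalityI subsetI)
  fix z assume "z \<in> (I0_R :: 'a::field jacobson set)"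
  then obtain k where k: "z = X ^ (k - 1) * fk_R k" "k \<ge> 1" by (auto simp: I0_R_def)
  then have "z = X ^ (k - 1) * fk_R (Suc (k - 1))" by simp
  then show "z \<in> {E * X ^ j | j. True}" by (auto simp: X_pow_mult_fk_R)
next
  fix z assume "z \<in> {E * (X::'a::field jacobson) ^ j | j. True}"
  then obtain j where "z = X ^ (Suc j - 1) * fk_R (Suc j)" by (auto simp: X_pow_mult_fk_R)
  then show "z \<in> I0_R" unfolding I0_R_def by (intro CollectI exI[of _ "Suc j"]) simp
qed

lemma E_mult_peval_X_bound:
  "degree g < n \<Longrightarrow> E * peval X g = (\<Sum>j<n. scalar (coeff g j) * (E * X ^ j))"
  by (simp add: peval_bound sum_distrib_left mult.assoc[symmetric] scalar_commute[of _ E])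

lemma E_mult_peval_X_sum:
  "E * peval X (\<Sum>i<n. monom (c i) (j i)) = (\<Sum>i<n. scalar (c i) * (E * X ^ (j i)))"
  by (simp add: peval_sum peval_monom sum_distrib_left mult.assoc[symmetric] scalar_commute[of _ E])

lemma kspan_R_I0_R: "kspan_R I0_R = {E * peval X g | g. True}"
proof (intro equalityI subsetI)
  fix z assume "z \<in> kspan_R I0_R"
  then obtain n :: nat and c v where z: "z = (\<Sum>i<n. scalar (c i) * v i)" and v: "\<forall>i<n. v i \<in> I0_R"
    by (auto simp: kspan_R_def)
  have "\<forall>i<n. \<exists>j. v i = E * X ^ j" using v by (auto simp: I0_R_eq)
  then obtain j where j: "\<forall>i<n. v i = E * X ^ j i" by metis
  have "z = E * peval X (\<Sum>i<n. monom (c i) (j i))" by (simp add: E_mult_peval_X_sum z j)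
  then show "z \<in> {E * peval X g | g. True}" by blast
next
  fix z assume "z \<in> {E * peval X g | g. True}"
  then obtain g where "z = E * peval X g" by blast
  then have "z = (\<Sum>j<Suc (degree g). scalar (coeff g j) * (E * X ^ j))"
    using E_mult_peval_X_bound[of g "Suc (degree g)"] by simp
  moreover have "\<forall>j<Suc (degree g). E * X ^ j \<in> I0_R" by (auto simp: I0_R_eq)
  ultimately show "z \<in> kspan_R I0_R" unfolding kspan_R_def
    by (intro CollectI exI[of _ "Suc (degree g)"] exI[of _ "coeff g"] exI[of _ "\<lambda>j. E * X ^ j"]) simp
qed

lemma E_mult_in_kspan_R_I0_R: "E * r \<in> kspan_R I0_R"
  using E_mult_row[of r] by (auto simp: kspan_R_I0_R)

lemma X_mult_kspan_R_I0_R: "l \<in> kspan_R I0_R \<Longrightarrow> X * l = 0"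
  by (auto simp: kspan_R_I0_R mult.assoc[symmetric] X_mult_E)

lemma fk_R_mult_fk_R: "k \<noteq> c \<Longrightarrow> fk_R (Suc k) * fk_R (Suc c) = (0::'a::field jacobson)"
proof -
  assume "k \<noteq> c"
  have "fk_R (Suc k) * fk_R (Suc c) = Y ^ k * (E * X ^ k * Y ^ c * E) * (X::'a jacobson) ^ c"
    by (simp add: fk_R_Suc mult.assoc)
  then show ?thesis using \<open>k \<noteq> c\<close> by (simp add: E_X_pow_Y_pow_E)
qed

lemma E_mult_peval_X_mult_fk_R:
  "E * peval X g * fk_R (Suc c) = scalar (coeff g c) * (E * (X::'a::field jacobson) ^ c)"
proof -
  have d: "degree g < Suc (degree g + c)" by simp
  have "E * peval X g * fk_R (Suc c) =
      (\<Sum>j<Suc (degree g + c). scalar (coeff g j) * ((E * X ^ j * Y ^ c * E) * X ^ c))"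
    by (simp add: E_mult_peval_X_bound[OF d] sum_distrib_right fk_R_Suc mult.assoc del: sum.lessThan_Suc)
  also have "\<dots> = (\<Sum>j<Suc (degree g + c). (if j = c then scalar (coeff g c) * (E * X ^ c) else 0))"
    by (intro sum.cong refl) (simp add: E_X_pow_Y_pow_E)
  finally show ?thesis by simp
qed

lemma scalar_mult_E_X_pow_eq_0: "scalar a * (E * X ^ c) = (0::'a::field jacobson) \<Longrightarrow> a = 0"
  using E_mult_peval_X_eq_0[of "monom a c"]
  by (simp add: peval_monom mult.assoc[symmetric] scalar_commute[of _ E])

lemma coeff_eq_0_if_E_mult_peval_X_in_Ssum_R:
  assumes "E * peval X g \<in> Ssum_R d" "d \<le> j"
  shows "coeff g j = 0"
proof -
  obtain v where eq: "E * peval X g = (\<Sum>i\<in>{1..d}. v i)" and v: "\<forall>i\<in>{1..d}. v i \<in> Sk_R i"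
    using assms(1) by (auto simp: Ssum_R_def)
  have "\<forall>i\<in>{1..d}. \<exists>r. v i = r * fk_R i" using v by (auto simp: Sk_R_def lprincipal_def)
  then obtain r where r: "\<forall>i\<in>{1..d}. v i = r i * fk_R i" by metis
  have orth: "fk_R i * fk_R (Suc j) = 0" if "i \<in> {1..d}" for i
    using that assms(2) fk_R_mult_fk_R[of "i - 1" j] by (cases i) auto
  have "E * peval X g * fk_R (Suc j) = (\<Sum>i\<in>{1..d}. r i * (fk_R i * fk_R (Suc j)))"
    by (simp add: eq r sum_distrib_right mult.assoc)
  also have "\<dots> = 0" by (intro sum.neutral) (simp add: orth)
  finally have "E * peval X g * fk_R (Suc j) = 0" .
  then show ?thesis by (intro scalar_mult_E_X_pow_eq_0[of _ j]) (simp add: E_mult_peval_X_mult_fk_R)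
qed

lemma E_mult_peval_X_in_Ssum_R:
  assumes "\<forall>j\<ge>d. coeff g j = 0"
  shows "E * peval X g \<in> Ssum_R d"
proof -
  define v where "v i = scalar (coeff g (i - 1)) * (E * X ^ (i - 1)) * fk_R i" for i
  have "E * X ^ k * fk_R (Suc k) = E * (X::'a jacobson) ^ k" for k
    using E_mult_peval_X_mult_fk_R[of "monom 1 k" k] by (simp add: peval_monom)
  then have "(\<Sum>i\<in>{1..d}. v i) = (\<Sum>k<d. scalar (coeff g k) * (E * X ^ k))"
    by (simp add: sum.atLeast1_atMost_eq v_def mult.assoc)
  also have "\<dots> = E * peval X g"
  proof (cases "g = 0")
    case False
    then have "degree g < d" using assms leading_coeff_0_iff not_le by blast
    then show ?thesis by (rule E_mult_peval_X_bound[symmetric])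
  qed simp
  moreover have "v i \<in> Sk_R i" for i by (auto simp: v_def Sk_R_def lprincipal_def)
  ultimately show ?thesis unfolding Ssum_R_def by force
qed

lemma kspan_R_I0_R_Int_Ssum_R:
  "kspan_R I0_R \<inter> Ssum_R d = {E * peval X g | g. \<forall>j\<ge>d. coeff g j = 0}"
  unfolding kspan_R_I0_R
  using coeff_eq_0_if_E_mult_peval_X_in_Ssum_R E_mult_peval_X_in_Ssum_R by blast

lemma sum_lessThan_add: "(\<Sum>i<m + n. f i) = (\<Sum>i<m. f i) + (\<Sum>i<n. f (m + i))"
  for m n :: nat
  by (induction n) (simp_all add: add.assoc)

lemma KyL_R_0: "0 \<in> KyL_R L"
  unfolding KyL_R_def by (intro CollectI exI[of _ 0]) simp

lemma KyL_R_single: "q \<in> Ky_R \<Longrightarrow> l \<in> L \<Longrightarrow> q * l \<in> KyL_R L"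
  unfolding KyL_R_def by (intro CollectI exI[of _ 1] exI[of _ "\<lambda>_. q"] exI[of _ "\<lambda>_. l"]) simp

lemma KyL_R_add:
  assumes "a \<in> KyL_R L" "b \<in> KyL_R L"
  shows "a + b \<in> KyL_R L"
proof -
  obtain n1 :: nat and q1 l1 where a: "a = (\<Sum>i<n1. q1 i * l1 i)" "\<forall>i<n1. q1 i \<in> Ky_R \<and> l1 i \<in> L"
    using assms(1) by (auto simp: KyL_R_def)
  obtain n2 :: nat and q2 l2 where b: "b = (\<Sum>i<n2. q2 i * l2 i)" "\<forall>i<n2. q2 i \<in> Ky_R \<and> l2 i \<in> L"
    using assms(2) by (auto simp: KyL_R_def)
  define q where "q i = (if i < n1 then q1 i else q2 (i - n1))" for i
  define l where "l i = (if i < n1 then l1 i else l2 (i - n1))" for i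
  have "a + b = (\<Sum>i<n1 + n2. q i * l i)"
    by (simp add: sum_lessThan_add a b q_def l_def)
  moreover have "\<forall>i<n1 + n2. q i \<in> Ky_R \<and> l i \<in> L"
    using a(2) b(2) by (auto simp: q_def l_def)
  ultimately show ?thesis unfolding KyL_R_def by blast
qed

lemma KyL_R_sum: "(\<And>i. i \<in> I \<Longrightarrow> f i \<in> KyL_R L) \<Longrightarrow> sum f I \<in> KyL_R L"
  by (induction I rule: infinite_finite_induct) (auto simp: KyL_R_0 KyL_R_add)

lemma Y_pow_in_Ky_R: "Y ^ a \<in> Ky_R"
  unfolding Ky_R_def using peval_monom[of Y 1 a] by (metis rangeI scalar_1 mult_1_left)

lemma KyL_R_mult:
  assumes L: "\<And>l. l \<in> L \<Longrightarrow> X * l = 0" and a: "a \<in> KyL_R L"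
  shows "r * a \<in> KyL_R L"
proof -
  obtain n :: nat and q l where a: "a = (\<Sum>i<n. q i * l i)" "\<forall>i<n. q i \<in> Ky_R \<and> l i \<in> L"
    using a by (auto simp: KyL_R_def)
  have "r * q i * l i \<in> KyL_R L" if "i < n" for i
  proof -
    obtain Q where Q: "r * q i * E = peval Y Q * E" using mult_E_eq_peval_Y_mult_E by blast
    have "r * q i * l i = peval Y Q * l i"
      using E_mult_eq_self[OF L[of "l i"]] a(2) that by (metis Q mult.assoc)
    then show ?thesis using a(2) that by (metis KyL_R_single Ky_R_def rangeI)
  qed
  then show ?thesis
    unfolding a(1) sum_distrib_left mult.assoc[symmetric] by (intro KyL_R_sum) auto
qed

lemma lideal_KyL_R:
  assumes "\<And>l. l \<in> L \<Longrightarrow> X * l = 0"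
  shows "lideal (KyL_R L)"
proof -
  have mult: "r * a \<in> KyL_R L" if "a \<in> KyL_R L" for r a
    using KyL_R_mult[where L=L] assms that by blast
  show ?thesis unfolding lideal_def using KyL_R_0 KyL_R_add mult mult[of _ "- 1"] by auto
qed

lemma KyL_R_subset: "lideal H \<Longrightarrow> L \<subseteq> H \<Longrightarrow> KyL_R L \<subseteq> H"
  unfolding KyL_R_def by (force intro: lideal_sum lideal_mult)

lemma X_torsion_peval_Y_mult:
  assumes "X * v = 0"
  shows "X_torsion (peval Y Q * (v::'a::field jacobson))"
proof -
  have "X ^ Suc (degree Q) * (peval Y Q * v) = X * (scalar (lead_coeff Q) * v)"
    by (simp add: mult.assoc X_pow_degree_mult_peval_Y[OF assms])
  also have "\<dots> = 0" by (simp only: mult_scalar_left_commute assms mult_zero_right)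
  finally show ?thesis unfolding X_torsion_def by blast
qed

lemma X_torsion_KyL_R: "(\<And>l. l \<in> L \<Longrightarrow> X * l = 0) \<Longrightarrow> z \<in> KyL_R L \<Longrightarrow> X_torsion z"
  unfolding KyL_R_def Ky_R_def by (force intro: X_torsion_sum X_torsion_peval_Y_mult)

lemma E_X_pow_mult_peval_Y_mult_E:
  "E * X ^ a * (peval Y Q * E) = scalar (coeff Q a) * (E::'a::field jacobson)"
proof -
  have expand: "peval Y Q * E = (\<Sum>k\<le>degree Q. scalar (coeff Q k) * (Y ^ k * E))"
    by (simp add: peval_def sum_distrib_right mult.assoc)
  have "E * X ^ a * (peval Y Q * E) = (\<Sum>k\<le>degree Q. scalar (coeff Q k) * (E * X ^ a * Y ^ k * E))"
    unfolding expand sum_distrib_left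
    by (intro sum.cong refl) (subst mult_scalar_left_commute, simp only: mult.assoc)
  also have "\<dots> = (\<Sum>k\<le>degree Q. if k = a then scalar (coeff Q a) * E else 0)"
    by (intro sum.cong refl) (auto simp: E_X_pow_Y_pow_E)
  also have "\<dots> = scalar (coeff Q a) * E" by (auto simp: coeff_eq_0)
  finally show ?thesis .
qed

lemma E_X_pow_mult_KyL_R:
  assumes "L \<subseteq> {E * peval X g | g. \<forall>j\<ge>d. coeff g j = 0}" "z \<in> KyL_R L"
  shows "\<exists>G. E * X ^ a * z = E * peval X G \<and> (\<forall>j\<ge>d. coeff G j = 0)"
proof -
  obtain n :: nat and q l where z: "z = (\<Sum>i<n. q i * l i)" and ql: "\<forall>i<n. q i \<in> Ky_R \<and> l i \<in> L"
    using assms(2) by (auto simp: KyL_R_def)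
  have "\<forall>i<n. \<exists>Q g. q i = peval Y Q \<and> l i = E * peval X g \<and> (\<forall>j\<ge>d. coeff g j = 0)"
    using ql assms(1) unfolding Ky_R_def by blast
  then obtain Q g where Qg: "\<And>i. i < n \<Longrightarrow>
      q i = peval Y (Q i) \<and> l i = E * peval X (g i) \<and> (\<forall>j\<ge>d. coeff (g i) j = 0)"
    by metis
  define G where "G = (\<Sum>i<n. smult (coeff (Q i) a) (g i))"
  have "z = (\<Sum>i<n. peval Y (Q i) * E * peval X (g i))" unfolding z using Qg by (auto simp: mult.assoc)
  then have "E * X ^ a * z = (\<Sum>i<n. E * X ^ a * (peval Y (Q i) * E) * peval X (g i))"
    by (simp add: sum_distrib_left mult.assoc)
  also have "\<dots> = (\<Sum>i<n. scalar (coeff (Q i) a) * E * peval X (g i))"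
    by (simp only: E_X_pow_mult_peval_Y_mult_E)
  also have "\<dots> = (\<Sum>i<n. E * (scalar (coeff (Q i) a) * peval X (g i)))"
    by (intro sum.cong refl) (simp only: scalar_commute[of _ E] mult.assoc)
  also have "\<dots> = E * peval X G" by (simp add: G_def peval_sum peval_smult sum_distrib_left)
  finally show ?thesis using Qg by (auto simp: G_def coeff_sum)
qed

lemma E_X_pow_mult_lprincipal_peval_X:
  assumes "z \<in> lprincipal (peval X p)"
  shows "\<exists>W. E * X ^ a * z = E * peval X (W * p)"
proof -
  obtain r where "z = r * peval X p" using assms by (auto simp: lprincipal_def)
  then have "E * X ^ a * z = E * peval X (row (X ^ a * r) 0) * peval X p"
    by (metis E_mult_row mult.assoc)
  then show ?thesis by (auto simp: peval_mult mult.assoc)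
qed

lemma not_semisimple_lideal_has_peval_X:
  assumes "lideal H" "\<not> semisimple_lideal H"
  shows "\<exists>g. g \<noteq> 0 \<and> peval X g \<in> H"
proof -
  obtain h where h: "h \<in> H" "\<not> X_torsion h" using assms semisimple_lideal_iff_X_torsion by blast
  obtain N g where g: "X ^ N * h = peval X g" using X_pow_mult_eq_peval_X by blast
  have "g \<noteq> 0" using h(2) g by (auto simp: X_torsion_def)
  moreover have "peval X g \<in> H" using g lideal_mult[OF assms(1) h(1)] by metis
  ultimately show ?thesis by blast
qed

lemma min_x_poly_R_exists:
  assumes "lideal H" "\<exists>g. g \<noteq> 0 \<and> peval X g \<in> H"
  shows "\<exists>p. min_x_poly_R H p"
proof -
  define d where "d = (LEAST n. \<exists>g. g \<noteq> 0 \<and> peval X g \<in> H \<and> degree g = n)"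
  obtain g0 where g0: "g0 \<noteq> 0" "peval X g0 \<in> H" using assms(2) by blast
  have "\<exists>g. g \<noteq> 0 \<and> peval X g \<in> H \<and> degree g = d"
    unfolding d_def by (rule LeastI[of _ "degree g0"]) (use g0 in blast)
  then obtain g where g: "g \<noteq> 0" "peval X g \<in> H" "degree g = d" by blast
  have min: "d \<le> degree q" if "q \<noteq> 0" "peval X q \<in> H" for q
    unfolding d_def by (rule Least_le) (use that in blast)
  define p where "p = smult (inverse (lead_coeff g)) g"
  have "lead_coeff p = 1" using g(1) by (simp add: p_def)
  moreover have "degree p = d" using g by (auto simp: p_def)
  moreover have "peval X p \<in> H" using lideal_mult[OF assms(1) g(2)] by (simp add: p_def peval_smult)
  ultimately show ?thesis unfolding min_x_poly_R_def using min by auto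
qed

lemma peval_div_mod: "peval Z g = peval Z (g div p) * peval Z p + peval Z (g mod p)"
  by (metis div_mult_mod_eq peval_add peval_mult)

lemma mult_peval_X_mod_mem:
  assumes "lideal H" "peval X p \<in> H" "u * peval X g \<in> H"
  shows "u * peval X (g mod p) \<in> H"
proof -
  have "u * peval X g = u * peval X (g div p) * peval X p + u * peval X (g mod p)"
    by (subst peval_div_mod[of X g p]) (simp add: algebra_simps)
  then have "u * peval X (g mod p) = u * peval X g - (u * peval X (g div p)) * peval X p"
    by (simp add: algebra_simps)
  then show ?thesis using assms by (metis lideal_diff lideal_mult)
qed

lemma min_x_poly_R_dvd:
  assumes "lideal H" "min_x_poly_R H p" "peval X g \<in> H"
  shows "p dvd g"
proof -
  have p: "lead_coeff p = 1" "peval X p \<in> H"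
    and min: "\<And>q. q \<noteq> 0 \<Longrightarrow> peval X q \<in> H \<Longrightarrow> degree p \<le> degree q"
    using assms(2) by (auto simp: min_x_poly_R_def)
  have "peval X (g mod p) \<in> H" using mult_peval_X_mod_mem[of H p 1 g] assms(1,3) p(2) by simp
  then have "g mod p = 0" using min degree_mod_less'[of p g] p(1) by fastforce
  then show ?thesis by (simp add: mod_eq_0_iff_dvd)
qed

lemma min_x_poly_R_unique:
  assumes H: "lideal H" and "min_x_poly_R H p1" "min_x_poly_R H p2"
  shows "p1 = p2"
proof (rule ccontr)
  assume "p1 \<noteq> p2"
  have p1: "lead_coeff p1 = 1" "peval X p1 \<in> H"
    and min1: "\<And>q. q \<noteq> 0 \<Longrightarrow> peval X q \<in> H \<Longrightarrow> degree p1 \<le> degree q"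
    using assms(2) by (auto simp: min_x_poly_R_def)
  have p2: "lead_coeff p2 = 1" "peval X p2 \<in> H"
    and min2: "\<And>q. q \<noteq> 0 \<Longrightarrow> peval X q \<in> H \<Longrightarrow> degree p2 \<le> degree q"
    using assms(3) by (auto simp: min_x_poly_R_def)
  have deg: "degree p1 = degree p2" using min1 min2 p1 p2 by (metis antisym one_neq_zero leading_coeff_0_iff)
  have "peval X (p1 - p2) \<in> H" using lideal_diff[OF H p1(2) p2(2)] by (simp add: peval_diff)
  then have "degree p1 \<le> degree (p1 - p2)" using min1 \<open>p1 \<noteq> p2\<close> by simp
  moreover have "degree (p1 - p2) \<le> degree p1" using degree_diff_le[of p1 "degree p1" p2] deg by simp
  moreover have "coeff (p1 - p2) (degree p1) = 0" using p1 p2 deg by simp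
  ultimately show False using \<open>p1 \<noteq> p2\<close> by (metis antisym leading_coeff_0_iff right_minus_eq)
qed

lemma min_x_poly_R_decompose_E_mult:
  assumes "lideal H" "min_x_poly_R H p" "E * peval X w \<in> H"
  shows "\<exists>l r. E * peval X w = l + r * peval X p \<and>
    l \<in> H \<inter> {E * peval X g | g. \<forall>j\<ge>degree p. coeff g j = 0}"
proof -
  have p: "lead_coeff p = 1" "peval X p \<in> H" using assms(2) by (auto simp: min_x_poly_R_def)
  have "E * peval X (w mod p) \<in> H" by (rule mult_peval_X_mod_mem[OF assms(1) p(2) assms(3)])
  moreover have "\<forall>j\<ge>degree p. coeff (w mod p) j = 0"
  proof (cases "w mod p = 0")
    case False
    have "p \<noteq> 0" using p(1) by auto
    then have "degree (w mod p) < degree p" using False by (rule degree_mod_less')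
    then show ?thesis by (auto intro: coeff_eq_0)
  qed simp
  moreover have "E * peval X w = E * peval X (w mod p) + (E * peval X (w div p)) * peval X p"
    by (subst peval_div_mod[of X w p]) (simp add: algebra_simps)
  ultimately show ?thesis by blast
qed

lemma min_x_poly_R_decomposition_exists:
  assumes H: "lideal H" and p: "min_x_poly_R H p" and h: "h \<in> H"
  shows "\<exists>a b. h = a + b \<and> a \<in> KyL_R (H \<inter> kspan_R I0_R \<inter> Ssum_R (degree p)) \<and>
    b \<in> lprincipal (peval X p)"
proof -
  let ?L = "H \<inter> kspan_R I0_R \<inter> Ssum_R (degree p)"
  obtain N w where w: "X ^ N * h = peval X w" using X_pow_mult_eq_peval_X by blast
  with H h have "p dvd w" by (metis lideal_mult min_x_poly_R_dvd[OF H p])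
  then obtain c where c: "X ^ N * h = peval X c * peval X p" by (auto simp: w peval_mult mult.commute)
  have "\<exists>l r. E * (X ^ a * h) = l + r * peval X p \<and> l \<in> ?L" for a
  proof -
    have row: "E * (X ^ a * h) = E * peval X (row (X ^ a * h) 0)" by (rule E_mult_row)
    have "E * (X ^ a * h) \<in> H" using lideal_mult[OF H h, of "E * X ^ a"] by (simp add: mult.assoc)
    then obtain l r where "E * (X ^ a * h) = l + r * peval X p"
      and "l \<in> H \<inter> {E * peval X g | g. \<forall>j\<ge>degree p. coeff g j = 0}"
      using min_x_poly_R_decompose_E_mult[OF H p] unfolding row by blast
    then show ?thesis unfolding kspan_R_I0_R_Int_Ssum_R[symmetric] Int_assoc by blast
  qed
  then obtain l r where lr: "\<And>a. E * (X ^ a * h) = l a + r a * peval X p" "\<And>a. l a \<in> ?L"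
    by metis
  have "h = Y ^ N * (X ^ N * h) + (\<Sum>a<N. Y ^ a * (E * (X ^ a * h)))"
    using Y_pow_X_pow_expansion[of h N] by (simp add: mult.assoc)
  also have "\<dots> = (\<Sum>a<N. Y ^ a * l a) + (Y ^ N * peval X c + (\<Sum>a<N. Y ^ a * r a)) * peval X p"
    by (simp only: c lr distrib_left distrib_right sum.distrib sum_distrib_right mult.assoc add_ac)
  finally have "h = (\<Sum>a<N. Y ^ a * l a) + (Y ^ N * peval X c + (\<Sum>a<N. Y ^ a * r a)) * peval X p" .
  moreover have "(\<Sum>a<N. Y ^ a * l a) \<in> KyL_R ?L"
    by (intro KyL_R_sum KyL_R_single Y_pow_in_Ky_R lr)
  ultimately show ?thesis unfolding lprincipal_def by blast
qed

lemma KyL_R_Int_lprincipal_peval_X: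
  assumes z: "z \<in> KyL_R (H \<inter> kspan_R I0_R \<inter> Ssum_R (degree p))" "z \<in> lprincipal (peval X p)"
  shows "z = 0"
proof -
  let ?L = "H \<inter> kspan_R I0_R \<inter> Ssum_R (degree p)"
  have L: "?L \<subseteq> {E * peval X g | g. \<forall>j\<ge>degree p. coeff g j = 0}"
    using kspan_R_I0_R_Int_Ssum_R by blast
  have "X * l = 0" if "l \<in> ?L" for l using that X_mult_kspan_R_I0_R by blast
  then obtain N where N: "X ^ N * z = 0" using z(1) X_torsion_KyL_R by (metis X_torsion_def)
  have "E * X ^ a * z = 0" for a
  proof -
    obtain G where G: "E * X ^ a * z = E * peval X G" "\<forall>j\<ge>degree p. coeff G j = 0"
      using E_X_pow_mult_KyL_R[OF L z(1)] by blast
    obtain W where W: "E * X ^ a * z = E * peval X (W * p)"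
      using E_X_pow_mult_lprincipal_peval_X[OF z(2)] by blast
    have "E * peval X (G - W * p) = 0" using G(1) W by (simp add: peval_diff right_diff_distrib)
    then have "G = W * p" using E_mult_peval_X_eq_0 by fastforce
    then have "G = 0"
      using G(2) dvd_imp_degree_le[of p G] leading_coeff_0_iff by (metis dvd_triv_right)
    then show ?thesis using G(1) by simp
  qed
  then show ?thesis using X_torsion_expansion[OF N] by (simp add: mult.assoc)
qed

theorem lideal_decomposition_not_semisimple_R:
  assumes H: "lideal H" and "\<not> semisimple_lideal H"
  shows "(\<exists>!p. min_x_poly_R H p) \<and>
    (\<forall>p. min_x_poly_R H p \<longrightarrow>
       lideal_direct_sum H (KyL_R (H \<inter> kspan_R I0_R \<inter> Ssum_R (degree p))) (lprincipal (peval X p)))"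
proof (intro conjI allI impI)
  show "\<exists>!p. min_x_poly_R H p"
    using min_x_poly_R_exists[OF H not_semisimple_lideal_has_peval_X[OF assms]]
      min_x_poly_R_unique[OF H] by blast
  fix p assume p: "min_x_poly_R H p"
  let ?L = "H \<inter> kspan_R I0_R \<inter> Ssum_R (degree p)"
  show "lideal_direct_sum H (KyL_R ?L) (lprincipal (peval X p))"
  proof (rule lideal_direct_sumI[OF H _ lideal_lprincipal])
    show "lideal (KyL_R ?L)" by (intro lideal_KyL_R X_mult_kspan_R_I0_R) blast
    show "KyL_R ?L \<subseteq> H" by (intro KyL_R_subset H) blast
    show "lprincipal (peval X p) \<subseteq> H"
      using p by (intro lprincipal_subset H) (simp add: min_x_poly_R_def)
  qed (use min_x_poly_R_decomposition_exists[OF H p] KyL_R_Int_lprincipal_peval_X in auto)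
qed

theorem lideal_decomposition_semisimple_R:
  assumes H: "lideal H" and ss: "semisimple_lideal H"
  shows "lideal_direct_sum H (KyL_R (H \<inter> kspan_R I0_R)) (lprincipal (peval X 0)) \<and>
    H = KyL_R (H \<inter> kspan_R I0_R)"
proof -
  let ?L = "H \<inter> kspan_R I0_R"
  have "H \<subseteq> KyL_R ?L"
  proof
    fix h assume h: "h \<in> H"
    obtain N where N: "X ^ N * h = 0" using semisimple_lideal_X_torsion[OF ss h] by (auto simp: X_torsion_def)
    have "E * X ^ a * h \<in> ?L" for a
      using lideal_mult[OF H h, of "E * X ^ a"] E_mult_in_kspan_R_I0_R[of "X ^ a * h"]
      by (simp add: mult.assoc)
    then show "h \<in> KyL_R ?L"
      by (subst X_torsion_expansion[OF N]) (intro KyL_R_sum KyL_R_single Y_pow_in_Ky_R)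
  qed
  moreover have "KyL_R ?L \<subseteq> H" by (intro KyL_R_subset H) blast
  ultimately have eq: "H = KyL_R ?L" by blast
  have "lideal_direct_sum H (KyL_R ?L) (lprincipal (peval X 0))"
    unfolding peval_0 lprincipal_0
  proof (rule lideal_direct_sumI[OF H])
    show "lideal (KyL_R ?L)" by (intro lideal_KyL_R X_mult_kspan_R_I0_R) blast
    show "lideal {0::'a jacobson}" using lideal_lprincipal[of 0] by (simp add: lprincipal_0)
  qed (use eq H lideal_0 in auto)
  with eq show ?thesis by blast
qed

section \<open>Transfer to coefficient functions\<close>

definition to_jac :: "'a::field jacobson \<Rightarrow> 'a jac" where
  "to_jac r = (\<lambda>(i, j). Poly_Mapping.lookup r (Bic i j))"

lemma to_jac_Bic: "to_jac r (i, j) = Poly_Mapping.lookup r (Bic i j)" by (simp add: to_jac_def)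

lemma jsupp_to_jac: "jsupp (to_jac r) = bic_pair ` Poly_Mapping.keys r"
proof (intro equalityI subsetI)
  fix x assume "x \<in> jsupp (to_jac r)"
  then obtain i j where x: "x = (i, j)" "Poly_Mapping.lookup r (Bic i j) \<noteq> 0"
    by (cases x) (auto simp: jsupp_def to_jac_Bic)
  then show "x \<in> bic_pair ` Poly_Mapping.keys r" by (auto simp: in_keys_iff intro!: image_eqI[where x="Bic i j"])
next
  fix x assume "x \<in> bic_pair ` Poly_Mapping.keys r"
  then obtain k where k: "k \<in> Poly_Mapping.keys r" "x = bic_pair k" by blast
  then show "x \<in> jsupp (to_jac r)" by (cases k) (auto simp: jsupp_def to_jac_Bic in_keys_iff)
qed

lemma to_jac_carrier: "to_jac r \<in> jac_carrier"
  by (simp add: jac_carrier_def jsupp_to_jac)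

lemma to_jac_inj: "to_jac r = to_jac s \<Longrightarrow> r = s"
proof (rule poly_mapping_eqI)
  fix k assume "to_jac r = to_jac s"
  then have "to_jac r (bic_pair k) = to_jac s (bic_pair k)" by simp
  then show "Poly_Mapping.lookup r k = Poly_Mapping.lookup s k" by (cases k) (simp add: to_jac_Bic)
qed

lemma inj_to_jac: "inj to_jac" using to_jac_inj by (rule injI)

definition of_jac :: "'a::field jac \<Rightarrow> 'a jacobson" where
  "of_jac f = Abs_poly_mapping (\<lambda>k. f (bic_pair k))"

lemma to_jac_of_jac: assumes "f \<in> jac_carrier" shows "to_jac (of_jac f) = f"
proof -
  have "{k. f (bic_pair k) \<noteq> 0} = bic_pair -` jsupp f" by (auto simp: jsupp_def)
  moreover have "finite (bic_pair -` jsupp f)"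
    using assms inj_bic_pair by (simp add: jac_carrier_def finite_vimageI)
  ultimately have "Poly_Mapping.lookup (of_jac f) = (\<lambda>k. f (bic_pair k))"
    by (simp add: of_jac_def)
  then show ?thesis by (auto simp: to_jac_def fun_eq_iff)
qed

lemma carrier_to_jac: "f \<in> jac_carrier \<Longrightarrow> \<exists>r. f = to_jac r"
  using to_jac_of_jac by metis

lemma carrier_image: assumes "A \<subseteq> jac_carrier" shows "A = to_jac ` {r. to_jac r \<in> A}"
proof (intro equalityI subsetI)
  fix x assume xA: "x \<in> A"
  then have "x \<in> jac_carrier" using assms by blast
  then have "to_jac (of_jac x) = x" by (rule to_jac_of_jac)
  then have "x = to_jac (of_jac x)" by simp
  then show "x \<in> to_jac ` {r. to_jac r \<in> A}" using xA by (intro image_eqI[of _ _ "of_jac x"]) auto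
next
  fix x assume "x \<in> to_jac ` {r. to_jac r \<in> A}" then show "x \<in> A" by auto
qed

lemma to_jac_eq_iff[simp]: "to_jac r = to_jac s \<longleftrightarrow> r = s"
  using to_jac_inj by blast

lemma to_jac_in_image[simp]: "to_jac r \<in> to_jac ` A \<longleftrightarrow> r \<in> A"
  by (auto dest: injD[OF inj_to_jac])

lemma to_jac_image_subset_iff[simp]: "to_jac ` A \<subseteq> to_jac ` U \<longleftrightarrow> A \<subseteq> U"
  by (rule inj_image_subset_iff[OF inj_to_jac])

lemma to_jac_image_eq[simp]: "to_jac ` A = to_jac ` U \<longleftrightarrow> A = U"
  by (rule inj_image_eq_iff[OF inj_to_jac])

lemma to_jac_image_Int: "to_jac ` A \<inter> to_jac ` U = to_jac ` (A \<inter> U)"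
  by (rule image_Int[OF inj_to_jac, symmetric])

lemma to_jac_0: "to_jac 0 = jzero" by (auto simp: to_jac_def jzero_def fun_eq_iff)
lemma to_jac_add: "to_jac (a + b) = jadd (to_jac a) (to_jac b)"
  by (simp add: to_jac_def jadd_def lookup_add fun_eq_iff)
lemma to_jac_uminus: "to_jac (- a) = jneg (to_jac a)"
  by (simp add: to_jac_def jneg_def fun_eq_iff lookup_uminus)
lemma to_jac_diff: "to_jac (a - b) = jsub (to_jac a) (to_jac b)"
  by (simp add: to_jac_def jsub_def fun_eq_iff lookup_minus)
lemma to_jac_yx_monom: "to_jac (yx_monom i j 1) = jmonom i j"
  by (auto simp: to_jac_def jmonom_def fun_eq_iff lookup_single when_def)
lemma to_jac_1: "to_jac 1 = jone"
  using to_jac_yx_monom[of 0 0] by (simp add: jone_def Bic_zero)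
lemma to_jac_X: "to_jac X = jx" by (simp add: X_def jx_def to_jac_yx_monom)
lemma to_jac_Y: "to_jac Y = jy" by (simp add: Y_def jy_def to_jac_yx_monom)
lemma to_jac_sum: "to_jac (sum f I) = (\<lambda>k. \<Sum>i\<in>I. to_jac (f i) k)"
  by (auto simp: to_jac_def fun_eq_iff lookup_sum)

lemma lookup_scalar_mult: "Poly_Mapping.lookup (scalar c * r) k = c * Poly_Mapping.lookup r k"
  unfolding scalar_def mult_map_scale_conv_mult[symmetric]
  by (simp add: map.rep_eq when_def)

lemma to_jac_scalar_mult: "to_jac (scalar c * r) = (\<lambda>k. c * to_jac r k)"
  by (auto simp: to_jac_def fun_eq_iff lookup_scalar_mult)

lemma lookup_mult_keys:
  "Poly_Mapping.lookup (r * s) k = (\<Sum>k1\<in>Poly_Mapping.keys r. \<Sum>k2\<in>Poly_Mapping.keys s.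
      if k = k1 + k2 then Poly_Mapping.lookup r k1 * Poly_Mapping.lookup (s::'a::field jacobson) k2 else 0)"
proof -
  have inner: "(\<Sum>q. Poly_Mapping.lookup s q when k = l + q) =
      (\<Sum>q\<in>Poly_Mapping.keys s. Poly_Mapping.lookup s q when k = l + q)" for l
    by (rule Sum_any.expand_superset) (auto simp: in_keys_iff when_def)
  have "Poly_Mapping.lookup (r * s) k =
      (\<Sum>l\<in>Poly_Mapping.keys r. Poly_Mapping.lookup r l *
        (\<Sum>q\<in>Poly_Mapping.keys s. Poly_Mapping.lookup s q when k = l + q))"
    unfolding lookup_mult inner by (rule Sum_any.expand_superset) (auto simp: in_keys_iff)
  also have "\<dots> = (\<Sum>k1\<in>Poly_Mapping.keys r. \<Sum>k2\<in>Poly_Mapping.keys s.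
      if k = k1 + k2 then Poly_Mapping.lookup r k1 * Poly_Mapping.lookup s k2 else 0)"
    unfolding sum_distrib_left when_def by (intro sum.cong refl) simp
  finally show ?thesis .
qed

lemma to_jac_mult: "to_jac (r * s) = jmul (to_jac r) (to_jac s)"
proof (rule ext)
  fix x :: "nat \<times> nat"
  obtain i j where x: "x = (i, j)" by (cases x)
  have reindex: "sum f (bic_pair ` K) = sum (\<lambda>k. f (bic_pair k)) K" for K and f :: "nat \<times> nat \<Rightarrow> 'a"
    using sum.reindex[OF inj_on_subset[OF inj_bic_pair]] by (simp add: comp_def)
  have summand: "(case bic_pair k1 of (a, b) \<Rightarrow> case bic_pair k2 of (c, d) \<Rightarrow>
        if (a + (c - b), d + (b - c)) = (i, j) then to_jac r (a, b) * to_jac s (c, d) else 0) =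
      (if Bic i j = k1 + k2 then Poly_Mapping.lookup r k1 * Poly_Mapping.lookup s k2 else 0)" for k1 k2
    by (cases k1; cases k2) (auto simp: to_jac_Bic)
  have "jmul (to_jac r) (to_jac s) x =
      (\<Sum>u\<in>bic_pair ` Poly_Mapping.keys r. \<Sum>v\<in>bic_pair ` Poly_Mapping.keys s.
        (case u of (a, b) \<Rightarrow> case v of (c, d) \<Rightarrow>
          if (a + (c - b), d + (b - c)) = (i, j) then to_jac r (a, b) * to_jac s (c, d) else 0))"
    by (simp add: jmul_def x jsupp_to_jac case_prod_beta)
  also have "\<dots> = (\<Sum>k1\<in>Poly_Mapping.keys r. \<Sum>k2\<in>Poly_Mapping.keys s.
      if Bic i j = k1 + k2 then Poly_Mapping.lookup r k1 * Poly_Mapping.lookup s k2 else 0)"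
    unfolding reindex by (intro sum.cong refl) (rule summand)
  finally show "to_jac (r * s) x = jmul (to_jac r) (to_jac s) x" by (simp add: x to_jac_Bic lookup_mult_keys)
qed

lemma ball_to_jac: "(\<forall>x\<in>to_jac ` A. P x) \<longleftrightarrow> (\<forall>a\<in>A. P (to_jac a))" by auto
lemma ball_carrier: "(\<forall>x\<in>jac_carrier. P x) \<longleftrightarrow> (\<forall>a. P (to_jac (a::'a::field jacobson)))"
  using carrier_to_jac to_jac_carrier by metis

lemma of_jac_to_jac: "of_jac (to_jac r) = r"
  using to_jac_of_jac[OF to_jac_carrier[of r]] by simp

lemma image_to_jacD: "x \<in> to_jac ` A \<Longrightarrow> of_jac x \<in> A \<and> x = to_jac (of_jac x)"
  by (auto simp: of_jac_to_jac)

lemma to_jac_of_jac_image: "x \<in> to_jac ` A \<Longrightarrow> to_jac (of_jac x) = x"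
  by (auto simp: of_jac_to_jac)

lemma to_jac_pow: "jpow (to_jac r) n = to_jac (r ^ n)"
proof (induction n)
  case 0 then show ?case by (simp add: jpow_def to_jac_1)
next
  case (Suc n)
  have "jpow (to_jac r) (Suc n) = jmul (to_jac r) (jpow (to_jac r) n)" by (simp add: jpow_def)
  then show ?case using Suc by (simp add: to_jac_mult)
qed

lemma eval_x_to_jac: "eval_x p = to_jac (peval X p)"
  by (auto simp: eval_x_def peval_def to_jac_sum to_jac_scalar_mult to_jac_pow to_jac_X[symmetric] fun_eq_iff)
lemma eval_y_to_jac: "eval_y p = to_jac (peval Y p)"
  by (auto simp: eval_y_def peval_def to_jac_sum to_jac_scalar_mult to_jac_pow to_jac_Y[symmetric] fun_eq_iff)

lemma fk_to_jac: "fk k = to_jac (fk_R k)"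
  by (simp add: fk_def fk_R_def to_jac_diff to_jac_mult to_jac_pow to_jac_X[symmetric] to_jac_Y[symmetric])

lemma left_multiples_to_jac: "{jmul r (to_jac a) | r. r \<in> jac_carrier} = to_jac ` lprincipal a"
proof (intro equalityI subsetI)
  fix z assume "z \<in> {jmul r (to_jac a) | r. r \<in> jac_carrier}"
  then obtain r where "z = jmul r (to_jac a)" "r \<in> jac_carrier" by blast
  then obtain r' where "z = to_jac (r' * a)" using carrier_to_jac to_jac_mult by metis
  then show "z \<in> to_jac ` lprincipal a" by (auto simp: lprincipal_def)
next
  fix z assume "z \<in> to_jac ` lprincipal a"
  then obtain r where "z = to_jac (r * a)" by (auto simp: lprincipal_def)
  then show "z \<in> {jmul r (to_jac a) | r. r \<in> jac_carrier}" by (auto simp: to_jac_mult to_jac_carrier)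
qed

lemma Rprinc_to_jac: "Rprinc (to_jac a) = to_jac ` lprincipal a"
  by (simp add: Rprinc_def left_multiples_to_jac)

lemma Sk_to_jac: "Sk k = to_jac ` Sk_R k"
  by (simp add: Sk_def fk_to_jac left_multiples_to_jac Sk_R_def lprincipal_def)

lemma Ky_to_jac: "Ky = to_jac ` Ky_R"
  by (auto simp: Ky_def Ky_R_def eval_y_to_jac)

lemma I0_to_jac: "I0 = to_jac ` I0_R"
  by (auto simp: I0_def I0_R_def fk_to_jac to_jac_pow to_jac_X[symmetric] to_jac_mult[symmetric])

lemma kspan_to_jac: "kspan (to_jac ` A) = to_jac ` kspan_R A"
proof (intro equalityI subsetI)
  fix z assume "z \<in> kspan (to_jac ` A)"
  then obtain n :: nat and c v where z: "z = (\<lambda>k. \<Sum>i<n. c i * v i k)" and v: "\<forall>i<n. v i \<in> to_jac ` A"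
    by (auto simp: kspan_def)
  have vv: "\<And>i. i < n \<Longrightarrow> to_jac (of_jac (v i)) = v i" using v to_jac_of_jac_image by blast
  have "z = to_jac (\<Sum>i<n. scalar (c i) * of_jac (v i))"
    unfolding z to_jac_sum to_jac_scalar_mult by (rule ext, rule sum.cong) (simp_all add: vv)
  moreover have "\<forall>i<n. of_jac (v i) \<in> A" using v image_to_jacD by blast
  then have "(\<Sum>i<n. scalar (c i) * of_jac (v i)) \<in> kspan_R A" unfolding kspan_R_def
    by (intro CollectI exI[of _ n] exI[of _ c] exI[of _ "\<lambda>i. of_jac (v i)"]) simp
  ultimately show "z \<in> to_jac ` kspan_R A" by simp
next
  fix z assume "z \<in> to_jac ` kspan_R A"
  then obtain n :: nat and c v where z: "z = to_jac (\<Sum>i<n. scalar (c i) * v i)" and v: "\<forall>i<n. v i \<in> A"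
    by (auto simp: kspan_R_def)
  have "z = (\<lambda>k. \<Sum>i<n. c i * to_jac (v i) k)" by (simp add: z to_jac_sum to_jac_scalar_mult)
  moreover have "\<forall>i<n. to_jac (v i) \<in> to_jac ` A" using v by simp
  ultimately show "z \<in> kspan (to_jac ` A)" unfolding kspan_def
    by (intro CollectI exI[of _ n] exI[of _ c] exI[of _ "\<lambda>i. to_jac (v i)"]) simp
qed

lemma Ssum_to_jac: "Ssum n = to_jac ` Ssum_R n"
proof (intro equalityI subsetI)
  fix z assume "z \<in> Ssum n"
  then obtain v where z: "z = (\<lambda>k. \<Sum>i\<in>{1..n}. v i k)" and v: "\<forall>i\<in>{1..n}. v i \<in> Sk i"
    by (auto simp: Ssum_def)
  have v': "\<forall>i\<in>{1..n}. v i \<in> to_jac ` Sk_R i" using v by (simp add: Sk_to_jac)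
  have vv: "\<And>i. i \<in> {1..n} \<Longrightarrow> to_jac (of_jac (v i)) = v i" using v' to_jac_of_jac_image by blast
  have "z = to_jac (\<Sum>i\<in>{1..n}. of_jac (v i))"
    unfolding z to_jac_sum by (rule ext, rule sum.cong) (simp_all add: vv)
  moreover have "\<forall>i\<in>{1..n}. of_jac (v i) \<in> Sk_R i" using v' image_to_jacD by blast
  then have "(\<Sum>i\<in>{1..n}. of_jac (v i)) \<in> Ssum_R n" unfolding Ssum_R_def
    by (intro CollectI exI[of _ "\<lambda>i. of_jac (v i)"]) simp
  ultimately show "z \<in> to_jac ` Ssum_R n" by simp
next
  fix z assume "z \<in> to_jac ` Ssum_R n"
  then obtain v where z: "z = to_jac (\<Sum>i\<in>{1..n}. v i)" and v: "\<forall>i\<in>{1..n}. v i \<in> Sk_R i"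
    by (auto simp: Ssum_R_def)
  have "z = (\<lambda>k. \<Sum>i\<in>{1..n}. to_jac (v i) k)" by (simp add: z to_jac_sum)
  moreover have "\<forall>i\<in>{1..n}. to_jac (v i) \<in> Sk i" using v by (simp add: Sk_to_jac)
  ultimately show "z \<in> Ssum n" unfolding Ssum_def
    by (intro CollectI exI[of _ "\<lambda>i. to_jac (v i)"]) simp
qed

lemma KyL_to_jac: "KyL (to_jac ` L) = to_jac ` KyL_R L"
proof (intro equalityI subsetI)
  fix z assume "z \<in> KyL (to_jac ` L)"
  then obtain n :: nat and q l where z: "z = (\<lambda>k. \<Sum>i<n. jmul (q i) (l i) k)"
    and ql: "\<forall>i<n. q i \<in> Ky \<and> l i \<in> to_jac ` L"
    by (auto simp: KyL_def)
  have ql': "\<forall>i<n. q i \<in> to_jac ` Ky_R \<and> l i \<in> to_jac ` L" using ql by (simp add: Ky_to_jac)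
  have vq: "\<And>i. i < n \<Longrightarrow> to_jac (of_jac (q i)) = q i" using ql' to_jac_of_jac_image by blast
  have vl: "\<And>i. i < n \<Longrightarrow> to_jac (of_jac (l i)) = l i" using ql' to_jac_of_jac_image by blast
  have "z = to_jac (\<Sum>i<n. of_jac (q i) * of_jac (l i))"
    unfolding z to_jac_sum to_jac_mult by (rule ext, rule sum.cong) (simp_all add: vq vl)
  moreover have "\<forall>i<n. of_jac (q i) \<in> Ky_R \<and> of_jac (l i) \<in> L" using ql' image_to_jacD by blast
  then have "(\<Sum>i<n. of_jac (q i) * of_jac (l i)) \<in> KyL_R L" unfolding KyL_R_def
    by (intro CollectI exI[of _ n] exI[of _ "\<lambda>i. of_jac (q i)"] exI[of _ "\<lambda>i. of_jac (l i)"]) simp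
  ultimately show "z \<in> to_jac ` KyL_R L" by simp
next
  fix z assume "z \<in> to_jac ` KyL_R L"
  then obtain n :: nat and q l where z: "z = to_jac (\<Sum>i<n. q i * l i)" and ql: "\<forall>i<n. q i \<in> Ky_R \<and> l i \<in> L"
    by (auto simp: KyL_R_def)
  have "z = (\<lambda>k. \<Sum>i<n. jmul (to_jac (q i)) (to_jac (l i)) k)" by (simp add: z to_jac_sum to_jac_mult)
  moreover have "\<forall>i<n. to_jac (q i) \<in> Ky \<and> to_jac (l i) \<in> to_jac ` L" using ql by (simp add: Ky_to_jac)
  ultimately show "z \<in> KyL (to_jac ` L)" unfolding KyL_def
    by (intro CollectI exI[of _ n] exI[of _ "\<lambda>i. to_jac (q i)"] exI[of _ "\<lambda>i. to_jac (l i)"]) simp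
qed

lemma lsub_to_jac: "lsub (to_jac ` A) \<longleftrightarrow> lideal A"
proof -
  have "to_jac ` A \<subseteq> jac_carrier" using to_jac_carrier by blast
  then show ?thesis
    unfolding lsub_def lideal_def ball_to_jac ball_carrier
    by (simp add: to_jac_0[symmetric] to_jac_add[symmetric] to_jac_uminus[symmetric] to_jac_mult[symmetric])
qed

lemma lsub_carrier: "lsub M \<Longrightarrow> M = to_jac ` {r. to_jac r \<in> M}"
  by (rule carrier_image) (simp add: lsub_def)

lemma singleton_jzero_eq: "{jzero} = to_jac ` {0}" by (simp add: to_jac_0)

lemma simple_sub_to_jac: "simple_sub (to_jac ` A) \<longleftrightarrow> simple_lideal A"
proof -
  have "(\<forall>N. lsub N \<and> N \<subseteq> to_jac ` A \<longrightarrow> N = {jzero} \<or> N = to_jac ` A) \<longleftrightarrow>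
        (\<forall>N. lideal N \<and> N \<subseteq> A \<longrightarrow> N = {0} \<or> N = A)"
  proof
    assume h: "\<forall>N. lsub N \<and> N \<subseteq> to_jac ` A \<longrightarrow> N = {jzero} \<or> N = to_jac ` A"
    show "\<forall>N. lideal N \<and> N \<subseteq> A \<longrightarrow> N = {0} \<or> N = A"
    proof (intro allI impI)
      fix N assume "lideal N \<and> N \<subseteq> A"
      then have "lsub (to_jac ` N) \<and> to_jac ` N \<subseteq> to_jac ` A" by (simp add: lsub_to_jac)
      from h[rule_format, OF this] have "to_jac ` N = {jzero} \<or> to_jac ` N = to_jac ` A" .
      then show "N = {0} \<or> N = A" by (simp only: singleton_jzero_eq to_jac_image_eq)
    qed
  next
    assume h: "\<forall>N. lideal N \<and> N \<subseteq> A \<longrightarrow> N = {0} \<or> N = A"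
    show "\<forall>N. lsub N \<and> N \<subseteq> to_jac ` A \<longrightarrow> N = {jzero} \<or> N = to_jac ` A"
    proof (intro allI impI)
      fix N assume N: "lsub N \<and> N \<subseteq> to_jac ` A"
      define N' where "N' = {r. to_jac r \<in> N}"
      have NN: "N = to_jac ` N'" unfolding N'_def using N lsub_carrier by blast
      have "lideal N' \<and> N' \<subseteq> A" using N by (simp add: NN lsub_to_jac)
      then have "N' = {0} \<or> N' = A" using h by blast
      then show "N = {jzero} \<or> N = to_jac ` A" by (auto simp: NN singleton_jzero_eq)
    qed
  qed
  moreover have "to_jac ` A \<noteq> {jzero} \<longleftrightarrow> A \<noteq> {0}" by (simp only: singleton_jzero_eq to_jac_image_eq)
  ultimately show ?thesis unfolding simple_sub_def simple_lideal_def lsub_to_jac by (simp only:)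
qed

lemma sums_to_jac:
  assumes "\<And>x. P x \<longleftrightarrow> (\<exists>r. x = to_jac r \<and> Q r)"
  shows "{(\<lambda>k. \<Sum>i<n. v i k) | (n::nat) v. \<forall>i<n. P (v i)} =
    to_jac ` {(\<Sum>i<n. v i) | (n::nat) v. \<forall>i<n. Q (v i)}"
proof (intro equalityI subsetI)
  fix z assume "z \<in> {(\<lambda>k. \<Sum>i<n. v i k) | (n::nat) v. \<forall>i<n. P (v i)}"
  then obtain n :: nat and v where z: "z = (\<lambda>k. \<Sum>i<n. v i k)" and v: "\<forall>i<n. P (v i)" by blast
  have v': "to_jac (of_jac (v i)) = v i" "Q (of_jac (v i))" if "i < n" for i
    using v that assms by (auto simp: of_jac_to_jac)
  have "z = to_jac (\<Sum>i<n. of_jac (v i))"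
    unfolding z to_jac_sum by (rule ext, rule sum.cong) (simp_all add: v')
  then show "z \<in> to_jac ` {(\<Sum>i<n. v i) | (n::nat) v. \<forall>i<n. Q (v i)}" using v' by blast
next
  fix z assume "z \<in> to_jac ` {(\<Sum>i<n. v i) | (n::nat) v. \<forall>i<n. Q (v i)}"
  then obtain n :: nat and v where "z = to_jac (\<Sum>i<n. v i)" and v: "\<forall>i<n. Q (v i)" by blast
  then have "z = (\<lambda>k. \<Sum>i<n. to_jac (v i) k)" by (simp add: to_jac_sum)
  moreover have "\<forall>i<n. P (to_jac (v i))" using v assms by blast
  ultimately show "z \<in> {(\<lambda>k. \<Sum>i<n. v i k) | (n::nat) v. \<forall>i<n. P (v i)}"
    by (intro CollectI exI[of _ n] exI[of _ "\<lambda>i. to_jac (v i)"]) simp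
qed

lemma ex_simple_sub_to_jac:
  "(\<exists>M. simple_sub M \<and> M \<subseteq> to_jac ` A \<and> x \<in> M) \<longleftrightarrow>
    (\<exists>r. x = to_jac r \<and> (\<exists>M. simple_lideal M \<and> M \<subseteq> A \<and> r \<in> M))"
proof
  assume "\<exists>M. simple_sub M \<and> M \<subseteq> to_jac ` A \<and> x \<in> M"
  then obtain M where M: "simple_sub M" "M \<subseteq> to_jac ` A" "x \<in> M" by blast
  define M' where "M' = {r. to_jac r \<in> M}"
  have "M = to_jac ` M'" unfolding M'_def using M(1) by (intro lsub_carrier) (simp add: simple_sub_def)
  with M have "simple_lideal M'" "M' \<subseteq> A" "x \<in> to_jac ` M'" by (simp_all add: simple_sub_to_jac)
  then show "\<exists>r. x = to_jac r \<and> (\<exists>M. simple_lideal M \<and> M \<subseteq> A \<and> r \<in> M)" by blast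
next
  assume "\<exists>r. x = to_jac r \<and> (\<exists>M. simple_lideal M \<and> M \<subseteq> A \<and> r \<in> M)"
  then obtain r M where "x = to_jac r" "simple_lideal M" "M \<subseteq> A" "r \<in> M" by blast
  then show "\<exists>M. simple_sub M \<and> M \<subseteq> to_jac ` A \<and> x \<in> M"
    by (intro exI[of _ "to_jac ` M"]) (simp add: simple_sub_to_jac image_mono)
qed

lemma semisimple_lmod_to_jac: "semisimple_lmod (to_jac ` A) \<longleftrightarrow> semisimple_lideal A"
  unfolding semisimple_lmod_def semisimple_lideal_def sums_of_simple_lideals_def lsub_to_jac
  by (simp only: sums_to_jac[OF ex_simple_sub_to_jac] to_jac_image_eq)

lemma direct_sum_decomp_to_jac:
  "direct_sum_decomp (to_jac ` A) (to_jac ` U) (to_jac ` V) \<longleftrightarrow> lideal_direct_sum A U V"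
proof -
  have "{jadd a b | a b. a \<in> to_jac ` U \<and> b \<in> to_jac ` V} = to_jac ` {a + b | a b. a \<in> U \<and> b \<in> V}"
  proof (intro equalityI subsetI)
    fix z assume "z \<in> {jadd a b | a b. a \<in> to_jac ` U \<and> b \<in> to_jac ` V}"
    then obtain a b where "z = jadd (to_jac a) (to_jac b)" "a \<in> U" "b \<in> V" by blast
    then have "z = to_jac (a + b)" "a + b \<in> {a + b | a b. a \<in> U \<and> b \<in> V}" by (auto simp: to_jac_add)
    then show "z \<in> to_jac ` {a + b | a b. a \<in> U \<and> b \<in> V}" by blast
  next
    fix z assume "z \<in> to_jac ` {a + b | a b. a \<in> U \<and> b \<in> V}"
    then obtain a b where "z = to_jac (a + b)" "a \<in> U" "b \<in> V" by blast
    then have "z = jadd (to_jac a) (to_jac b)" "to_jac a \<in> to_jac ` U" "to_jac b \<in> to_jac ` V" by (auto simp: to_jac_add)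
    then show "z \<in> {jadd a b | a b. a \<in> to_jac ` U \<and> b \<in> to_jac ` V}" by blast
  qed
  then show ?thesis
    unfolding direct_sum_decomp_def lideal_direct_sum_def lsub_to_jac to_jac_image_Int
      singleton_jzero_eq to_jac_image_eq
    by simp
qed

lemma min_x_poly_to_jac: "min_x_poly (to_jac ` A) p \<longleftrightarrow> min_x_poly_R A p"
  by (simp add: min_x_poly_def min_x_poly_R_def eval_x_to_jac)

theorem corollary3:
  fixes H :: "'a::field jac set"
  assumes "left_ideal H"
  shows "(\<not> semisimple_lmod H \<longrightarrow>
            (\<exists>!p. min_x_poly H p) \<and>
            (\<forall>p. min_x_poly H p \<longrightarrow>
               direct_sum_decomp H (KyL (H \<inter> kspan I0 \<inter> Ssum (degree p))) (Rprinc (eval_x p))))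
       \<and> (semisimple_lmod H \<longrightarrow>
            direct_sum_decomp H (KyL (H \<inter> kspan I0)) (Rprinc (eval_x 0)) \<and>
            H = KyL (H \<inter> kspan I0))"
proof -
  obtain G where H: "H = to_jac ` G" using lsub_carrier[OF assms] by blast
  have G: "lideal G" using assms by (simp add: H lsub_to_jac)
  show ?thesis
    unfolding H semisimple_lmod_to_jac min_x_poly_to_jac I0_to_jac kspan_to_jac Ssum_to_jac
      to_jac_image_Int KyL_to_jac eval_x_to_jac Rprinc_to_jac direct_sum_decomp_to_jac to_jac_image_eq
    using lideal_decomposition_not_semisimple_R[OF G] lideal_decomposition_semisimple_R[OF G] by blast
qed

end
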